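(* Let $\Gamma=(V,E)$ be a finite simple graph on $V=\{1,\dots,n\}$, let $\omega$ be the clique number of $\Gamma$ (the largest size of a clique in $\Gamma$), and let $\{T_j\}_{j=1}^n$ be a $\Gamma$-family on a Hilbert space $\mathcal{H}$ satisfying the weak Brehmer's condition. Then for each $m\geq1$ and each $h\in\mathcal{H}$, \[\sum_{p\in A_\Gamma^+,\ |p|=m}\|T_p^*h\|^2\leq\binom{\omega+m-1}{m}\|h\|^2.\]
   Context: $A_\Gamma^+=\langle e_1,\dots,e_n : e_ie_j=e_je_i \text{ if } ij\in E\rangle$ is the right-angled Artin monoid; $|p|$ denotes the total number of generators in any expression of $p$ as a product of generators (well-defined), with $|1|=0$. A $\Gamma$-family is a family of contractions $T_1,\dots,T_n$ on $\mathcal{H}$ with $T_iT_j=T_jT_i$ whenever $ij\in E$; it defines a unital representation $p\mapsto T_p$ of $A_\Gamma^+$ with $T_{e_i}=T_i$. For a finite $U\subset A_\Gamma^+$, $\vee U=\infty$ if $\bigcap_{p\in U}pA_\Gamma^+=\emptyset$, otherwise $\vee U$ is the unique $r$ with $\bigcap_{p\in U}pA_\Gamma^+=rA_\Gamma^+$ ($\vee\emptyset=1$); $T_{\vee U}:=0$ if $\vee U=\infty$. For a set $U$ of generators, $\vee U<\infty$ iff the corresponding vertices form a clique, and then $\vee U=\prod_{e_i\in U}e_i$. The complement graph $\Gamma^c$ has vertex set $V$ and edges $\{ij: i\ne j,\ ij\notin E\}$. Weak Brehmer's condition: for each vertex set $V_i$ of a connected component of $\Gamma^c$, with $\Gamma_i=\Gamma|_{V_i}$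 (the induced subgraph), and for each clique $W$ of $\Gamma_i$ (including $W=\emptyset$), setting $N_{\Gamma_i}(W)=\{e_j: j\in V_i,\ jk\in E \text{ for all } k\in W\}$, one has $\sum_{U\subseteq N_{\Gamma_i}(W)}(-1)^{|U|}T_{\vee U}T_{\vee U}^*\geq0$. *)

theory Defs
  imports "HOL-Analysis.Analysis"
begin

text \<open>Elements of the right-angled Artin monoid are represented by words (lists of
  vertices) modulo the congruence generated by swapping adjacent commuting letters.\<close>

definition swap_step :: "(nat \<Rightarrow> nat \<Rightarrow> bool) \<Rightarrow> nat list \<Rightarrow> nat list \<Rightarrow> bool" where
  "swap_step E u v \<longleftrightarrow> (\<exists>xs ys a b. u = xs @ [a, b] @ ys \<and> v = xs @ [b, a] @ ys \<and> E a b)"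

definition trace_eq :: "(nat \<Rightarrow> nat \<Rightarrow> bool) \<Rightarrow> nat list \<Rightarrow> nat list \<Rightarrow> bool" where
  "trace_eq E = (swap_step E)\<^sup>*\<^sup>*"

definition words :: "nat \<Rightarrow> nat list set" where
  "words n = {w. set w \<subseteq> {1..n}}"

definition monoid_elems_len :: "nat \<Rightarrow> (nat \<Rightarrow> nat \<Rightarrow> bool) \<Rightarrow> nat \<Rightarrow> nat list set set" where
  "monoid_elems_len n E m = {w \<in> words n. length w = m} // {(u, v). trace_eq E u v}"

definition T_word :: "(nat \<Rightarrow> 'h \<Rightarrow> 'h) \<Rightarrow> nat list \<Rightarrow> 'h \<Rightarrow> 'h" where
  "T_word T w = foldr (\<lambda>i f. T i \<circ> f) w id"

definition left_div :: "nat \<Rightarrow> (nat \<Rightarrow> nat \<Rightarrow> bool) \<Rightarrow> nat list \<Rightarrow> nat list \<Rightarrow> bool" where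
  "left_div n E p q \<longleftrightarrow> (\<exists>r \<in> words n. trace_eq E (p @ r) q)"

definition is_join :: "nat \<Rightarrow> (nat \<Rightarrow> nat \<Rightarrow> bool) \<Rightarrow> nat list set \<Rightarrow> nat list \<Rightarrow> bool" where
  "is_join n E U r \<longleftrightarrow> r \<in> words n \<and>
     (\<forall>q \<in> words n. (\<forall>p \<in> U. left_div n E p q) \<longleftrightarrow> left_div n E r q)"

text \<open>T_{\<or>U}, which is 0 when \<or>U = \<infinity> (no such r exists).\<close>
definition T_join :: "nat \<Rightarrow> (nat \<Rightarrow> nat \<Rightarrow> bool) \<Rightarrow> (nat \<Rightarrow> 'h \<Rightarrow> 'h::real_vector) \<Rightarrow> nat list set \<Rightarrow> 'h \<Rightarrow> 'h" where
  "T_join n E T U = (if \<exists>r. is_join n E U r then T_word T (SOME r. is_join n E U r) else (\<lambda>_. 0))"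

definition is_clique :: "(nat \<Rightarrow> nat \<Rightarrow> bool) \<Rightarrow> nat set \<Rightarrow> bool" where
  "is_clique E W \<longleftrightarrow> (\<forall>i \<in> W. \<forall>j \<in> W. i \<noteq> j \<longrightarrow> E i j)"

definition clique_number :: "nat \<Rightarrow> (nat \<Rightarrow> nat \<Rightarrow> bool) \<Rightarrow> nat" where
  "clique_number n E = Max {card W | W. W \<subseteq> {1..n} \<and> is_clique E W}"

definition compl_component :: "nat \<Rightarrow> (nat \<Rightarrow> nat \<Rightarrow> bool) \<Rightarrow> nat \<Rightarrow> nat set" where
  "compl_component n E v = {u \<in> {1..n}.
     (\<lambda>i j. i \<in> {1..n} \<and> j \<in> {1..n} \<and> i \<noteq> j \<and> \<not> E i j)\<^sup>*\<^sup>* v u}"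

definition gamma_family :: "nat \<Rightarrow> (nat \<Rightarrow> nat \<Rightarrow> bool) \<Rightarrow> (nat \<Rightarrow> 'h \<Rightarrow> 'h::real_normed_vector) \<Rightarrow> bool" where
  "gamma_family n E T \<longleftrightarrow>
     (\<forall>i \<in> {1..n}. bounded_linear (T i) \<and> (\<forall>x. norm (T i x) \<le> norm x)) \<and>
     (\<forall>i \<in> {1..n}. \<forall>j \<in> {1..n}. E i j \<longrightarrow> T i \<circ> T j = T j \<circ> T i)"

definition weak_brehmer :: "nat \<Rightarrow> (nat \<Rightarrow> nat \<Rightarrow> bool) \<Rightarrow> (nat \<Rightarrow> 'h \<Rightarrow> 'h::real_inner) \<Rightarrow> bool" where
  "weak_brehmer n E T \<longleftrightarrow>
     (\<forall>v \<in> {1..n}. \<forall>W. W \<subseteq> compl_component n E v \<and> is_clique E W \<longrightarrow>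
        (let N = {j \<in> compl_component n E v. \<forall>k \<in> W. E j k} in
         \<forall>h. 0 \<le> (\<Sum>U \<in> Pow N. (-1) ^ card U *\<^sub>R
                    T_join n E T ((\<lambda>i. [i]) ` U) (adjoint (T_join n E T ((\<lambda>i. [i]) ` U)) h)) \<bullet> h))"

end

theory Submission
  imports Defs
begin

(* Order the vertices by the least vertex of their component in the complement graph, and
  then by label.  Writing every monoid element as its least initial letter followed by the
  rest turns the sum of \<parallel>T\<^sub>p\<^sup>* g\<parallel>\<^sup>2 over the elements p of length m with no initial letter in a
  set B into a recursion in m.  The components are treated one at a time, from the last one
  backwards.  For a component C, the weak Brehmer condition says that certain alternating
  sums, one for each clique K of C, are nonnegative, and Moebius inversion shows that they add
  up to \<parallel>g\<parallel>\<^sup>2.  An induction on m then bounds the sum by the average, with these weights, of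
  multiset counts attached to the cliques K, while the letters of later components are
  controlled by the bound already proved for them.  Vertices of different components are
  adjacent, so the clique numbers of the components add up to that of the graph, and the
  multiset counts combine into the binomial coefficient of the claim. *)

section \<open>Adjoints on Hilbert spaces\<close>

lemma apollonius_identity:
  fixes x u v :: "'a::real_inner"
  shows "(norm (u - v))\<^sup>2
    = 2 * (norm (x - u))\<^sup>2 + 2 * (norm (x - v))\<^sup>2 - 4 * (norm (x - (1/2) *\<^sub>R (u + v)))\<^sup>2"
  by (simp add: power2_norm_eq_inner inner_diff inner_add inner_commute algebra_simps)

lemma Cauchy_if_norm_diff_sq_le:
  fixes s :: "nat \<Rightarrow> 'a::real_normed_vector"
  assumes "c \<ge> 0" and dist: "\<And>i j. (norm (s i - s j))\<^sup>2 \<le> c / real (Suc i) + c / real (Suc j)"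
  shows "Cauchy s"
proof (rule metric_CauchyI)
  fix e :: real assume e: "e > 0"
  obtain N where "2 * c / e\<^sup>2 < real N" using reals_Archimedean2 by blast
  then have N: "2 * c / e\<^sup>2 < real (Suc N)" by simp
  have "dist (s i) (s j) < e" if "i \<ge> N" "j \<ge> N" for i j
  proof -
    have "c / real (Suc i) \<le> c / real (Suc N)" "c / real (Suc j) \<le> c / real (Suc N)"
      using that assms(1) by (simp_all add: frac_le)
    moreover have "2 * c / real (Suc N) < e\<^sup>2" using N e by (simp add: field_simps)
    ultimately have "(norm (s i - s j))\<^sup>2 < e\<^sup>2" using dist[of i j] by simp
    then show ?thesis using e by (simp add: dist_norm power_less_imp_less_base)
  qed
  then show "\<exists>M. \<forall>m\<ge>M. \<forall>n\<ge>M. dist (s m) (s n) < e" by blast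
qed

lemma square_add_inverse_Suc_le:
  fixes d :: real
  assumes "0 \<le> d"
  shows "(d + 1 / real (Suc k))\<^sup>2 \<le> d\<^sup>2 + (2 * d + 1) / real (Suc k)"
proof -
  have "(d + 1 / real (Suc k))\<^sup>2 = d\<^sup>2 + 2 * d / real (Suc k) + 1 / (real (Suc k))\<^sup>2"
    by (simp add: power2_sum power_divide)
  moreover have "1 / (real (Suc k))\<^sup>2 \<le> 1 / real (Suc k)" by (simp add: power2_eq_square divide_simps)
  ultimately show ?thesis by (simp add: add_divide_distrib)
qed

lemma closed_subspace_nearest_point:
  fixes M :: "'a::{real_inner,complete_space} set"
  assumes cl: "closed M" and sub: "subspace M"
  obtains m0 where "m0 \<in> M" "\<And>m. m \<in> M \<Longrightarrow> norm (x - m0) \<le> norm (x - m)"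
proof -
  define d where "d = Inf ((\<lambda>m. norm (x - m)) ` M)"
  have ne: "(\<lambda>m. norm (x - m)) ` M \<noteq> {}" using sub subspace_0 by blast
  have bdd: "bdd_below ((\<lambda>m. norm (x - m)) ` M)" by (rule bdd_belowI[of _ 0]) auto
  have d_le: "d \<le> norm (x - m)" if "m \<in> M" for m
    unfolding d_def using bdd that by (simp add: cInf_lower)
  have d0: "d \<ge> 0" unfolding d_def using ne by (auto intro: cInf_greatest)
  have "\<exists>m\<in>M. norm (x - m) < d + 1 / real (Suc k)" for k
    using cInf_less_iff[OF ne bdd, of "d + 1 / real (Suc k)"] by (simp add: d_def)
  then obtain s where sM: "\<And>k. s k \<in> M" and s_lt: "\<And>k. norm (x - s k) < d + 1 / real (Suc k)"
    by metis
  define c where "c = 2 * d + 1"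
  have s_sq: "(norm (x - s k))\<^sup>2 \<le> d\<^sup>2 + c / real (Suc k)" for k
  proof -
    have "(norm (x - s k))\<^sup>2 \<le> (d + 1 / real (Suc k))\<^sup>2"
      using s_lt[of k] by (intro power_mono) auto
    then show ?thesis using square_add_inverse_Suc_le[OF d0, of k] unfolding c_def by linarith
  qed
  have s_dist: "(norm (s i - s j))\<^sup>2 \<le> 2 * c / real (Suc i) + 2 * c / real (Suc j)" for i j
  proof -
    have "(1/2) *\<^sub>R (s i + s j) \<in> M" using sM sub by (simp add: subspace_add subspace_scale)
    then have "d\<^sup>2 \<le> (norm (x - (1/2) *\<^sub>R (s i + s j)))\<^sup>2" using d_le d0 by (simp add: power_mono)
    then show ?thesis using apollonius_identity[of "s i" "s j" x] s_sq[of i] s_sq[of j] by linarith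
  qed
  have "Cauchy s" using d0 s_dist by (intro Cauchy_if_norm_diff_sq_le[of "2 * c"]) (simp_all add: c_def)
  then obtain m0 where lim: "s \<longlonglongrightarrow> m0" using Cauchy_convergent_iff convergent_def by blast
  have "m0 \<in> M" using cl sM lim closed_sequentially by blast
  moreover have "norm (x - m0) \<le> d"
  proof (rule LIMSEQ_le)
    show "(\<lambda>k. norm (x - s k)) \<longlonglongrightarrow> norm (x - m0)" by (intro tendsto_intros lim)
    show "(\<lambda>k. d + 1 / real (Suc k)) \<longlonglongrightarrow> d"
      using tendsto_add[OF tendsto_const LIMSEQ_inverse_real_of_nat] by (simp add: inverse_eq_divide)
    show "\<exists>N. \<forall>k\<ge>N. norm (x - s k) \<le> d + 1 / real (Suc k)" using s_lt less_imp_le by blast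
  qed
  ultimately show ?thesis using that d_le by (meson order_trans)
qed

lemma nearest_point_orthogonal:
  fixes M :: "'a::real_inner set"
  assumes sub: "subspace M" and m0M: "m0 \<in> M"
    and nearest: "\<And>m. m \<in> M \<Longrightarrow> norm (x - m0) \<le> norm (x - m)" and mM: "m \<in> M"
  shows "(x - m0) \<bullet> m = 0"
proof (rule ccontr)
  define a where "a = x - m0"
  assume "(x - m0) \<bullet> m \<noteq> 0"
  then have ne: "a \<bullet> m \<noteq> 0" and mm: "m \<bullet> m > 0" by (auto simp: a_def)
  define t where "t = (a \<bullet> m) / (m \<bullet> m)"
  have "m0 + t *\<^sub>R m \<in> M" using sub m0M mM by (simp add: subspace_add subspace_scale)
  then have "norm a \<le> norm (a - t *\<^sub>R m)"
    using nearest by (simp add: a_def algebra_simps)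
  then have "(norm a)\<^sup>2 \<le> (norm (a - t *\<^sub>R m))\<^sup>2" by (simp add: power_mono)
  also have "\<dots> = (norm a)\<^sup>2 - 2 * t * (a \<bullet> m) + t * t * (m \<bullet> m)"
    by (simp add: power2_norm_eq_inner inner_diff inner_commute algebra_simps)
  also have "\<dots> = (norm a)\<^sup>2 - (a \<bullet> m)\<^sup>2 / (m \<bullet> m)"
    using mm by (simp add: t_def power2_eq_square field_simps)
  finally have "(a \<bullet> m)\<^sup>2 / (m \<bullet> m) \<le> 0" by linarith
  moreover have "(a \<bullet> m)\<^sup>2 / (m \<bullet> m) > 0" using ne mm by simp
  ultimately show False by linarith
qed

text \<open>The library proves \<open>adjoint_works\<close> only for euclidean spaces; on a Hilbert space the
  adjoint exists by the Riesz representation theorem.\<close>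

lemma riesz_representation:
  fixes \<phi> :: "'a::{real_inner,complete_space} \<Rightarrow> real"
  assumes "bounded_linear \<phi>"
  obtains y where "\<And>x. \<phi> x = x \<bullet> y"
proof (cases "\<forall>x. \<phi> x = 0")
  case True
  then show ?thesis using that[of 0] by simp
next
  case False
  then obtain x0 where x0: "\<phi> x0 \<noteq> 0" by blast
  interpret bounded_linear \<phi> by fact
  define M where "M = {x. \<phi> x = 0}"
  have sub: "subspace M" unfolding M_def subspace_def by (simp add: add scale)
  have "closed M" unfolding M_def
    by (rule closed_Collect_eq[OF linear_continuous_on[OF assms] continuous_on_const])
  then obtain m0 where m0M: "m0 \<in> M" and nearest: "\<And>m. m \<in> M \<Longrightarrow> norm (x0 - m0) \<le> norm (x0 - m)"
    using closed_subspace_nearest_point sub by blast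
  define w where "w = x0 - m0"
  have \<phi>w: "\<phi> w = \<phi> x0" using m0M by (simp add: w_def M_def diff)
  have ww: "w \<bullet> w > 0" using \<phi>w x0 zero by auto
  have "\<phi> x = x \<bullet> ((\<phi> w / (w \<bullet> w)) *\<^sub>R w)" for x
  proof -
    have "x - (\<phi> x / \<phi> w) *\<^sub>R w \<in> M" using \<phi>w x0 by (simp add: M_def diff scale)
    then have "w \<bullet> (x - (\<phi> x / \<phi> w) *\<^sub>R w) = 0"
      using nearest_point_orthogonal[OF sub m0M nearest] by (simp add: w_def)
    then have "w \<bullet> x = (\<phi> x / \<phi> w) * (w \<bullet> w)" by (simp add: inner_diff)
    then show ?thesis using \<phi>w x0 ww by (simp add: inner_commute field_simps)
  qed
  then show ?thesis by (rule that)
qed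

lemma adjoint_works_hilbert:
  fixes f :: "'a::{real_inner,complete_space} \<Rightarrow> 'a"
  assumes "bounded_linear f"
  shows "f x \<bullet> y = x \<bullet> adjoint f y"
proof -
  have "\<exists>y'. \<forall>x. f x \<bullet> y = x \<bullet> y'" for y
    using riesz_representation[OF bounded_linear_compose[OF bounded_linear_inner_left assms]] by metis
  then have "\<exists>f'. \<forall>x y. f x \<bullet> y = x \<bullet> f' y" by metis
  then show ?thesis
    unfolding adjoint_def by (rule someI_ex[where P="\<lambda>f'. \<forall>x y. f x \<bullet> y = x \<bullet> f' y", THEN spec, THEN spec])
qed

lemma adjoint_eqI_hilbert:
  fixes f :: "'a::{real_inner,complete_space} \<Rightarrow> 'a"
  assumes "bounded_linear f" and "\<And>x y. f x \<bullet> y = x \<bullet> g y"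
  shows "adjoint f = g"
proof
  fix y
  have "x \<bullet> (adjoint f y - g y) = 0" for x
    using adjoint_works_hilbert[OF assms(1), of x y] assms(2)[of x y] by (simp add: inner_diff_right)
  from this[of "adjoint f y - g y"] show "adjoint f y = g y" by simp
qed

lemma adjoint_comp_hilbert:
  fixes f g :: "'a::{real_inner,complete_space} \<Rightarrow> 'a"
  assumes f: "bounded_linear f" and g: "bounded_linear g"
  shows "adjoint (f \<circ> g) = adjoint g \<circ> adjoint f"
  using bounded_linear_compose[OF f g]
  by (intro adjoint_eqI_hilbert) (simp_all add: o_def adjoint_works_hilbert[OF f] adjoint_works_hilbert[OF g])

lemma adjoint_id_hilbert: "adjoint (id :: 'a::{real_inner,complete_space} \<Rightarrow> 'a) = id"
  by (rule adjoint_eqI_hilbert) (auto intro: bounded_linear_ident simp: id_def)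

lemma inner_apply_adjoint_self:
  fixes f :: "'a::{real_inner,complete_space} \<Rightarrow> 'a"
  assumes "bounded_linear f"
  shows "f (adjoint f y) \<bullet> y = (norm (adjoint f y))\<^sup>2"
  using adjoint_works_hilbert[OF assms, of "adjoint f y" y] by (simp add: power2_norm_eq_inner)

section \<open>Traces and left divisibility\<close>

lemma trace_eq_refl [simp]: "trace_eq E u u"
  by (simp add: trace_eq_def)

lemma trace_eq_trans: "trace_eq E u v \<Longrightarrow> trace_eq E v w \<Longrightarrow> trace_eq E u w"
  unfolding trace_eq_def by simp

lemma trace_eq_append_context:
  assumes "trace_eq E u v"
  shows "trace_eq E (p @ u @ q) (p @ v @ q)"
proof -
  have step: "swap_step E (p @ x @ q) (p @ y @ q)" if "swap_step E x y" for x y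
    using that unfolding swap_step_def by (metis append.assoc)
  show ?thesis
    using assms unfolding trace_eq_def
    by (induction rule: rtranclp_induct) (auto intro: rtranclp.rtrancl_into_rtrancl step)
qed

lemma trace_eq_Cons: "trace_eq E u v \<Longrightarrow> trace_eq E (c # u) (c # v)"
  using trace_eq_append_context[of E u v "[c]" "[]"] by simp

lemma trace_eq_mset: "trace_eq E u v \<Longrightarrow> mset u = mset v"
  unfolding trace_eq_def swap_step_def by (induction rule: rtranclp_induct) auto

lemma trace_eq_length: "trace_eq E u v \<Longrightarrow> length u = length v"
  using trace_eq_mset size_mset by metis

lemma trace_eq_words: "trace_eq E u v \<Longrightarrow> u \<in> words n \<Longrightarrow> v \<in> words n"
  using trace_eq_mset unfolding words_def by (metis mem_Collect_eq set_mset_mset)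

lemma remove1_words: "w \<in> words n \<Longrightarrow> remove1 a w \<in> words n"
  using set_remove1_subset unfolding words_def by fastforce

definition initial_letter :: "(nat \<Rightarrow> nat \<Rightarrow> bool) \<Rightarrow> nat list \<Rightarrow> nat \<Rightarrow> bool" where
  "initial_letter E w a \<longleftrightarrow> a \<in> set w \<and> (\<forall>c \<in> set (takeWhile (\<lambda>x. x \<noteq> a) w). E c a)"

lemma initial_letter_Nil [simp]: "\<not> initial_letter E [] a"
  by (simp add: initial_letter_def)

lemma initial_letter_Cons: "initial_letter E (c # w) a \<longleftrightarrow> c = a \<or> (E c a \<and> initial_letter E w a)"
  by (auto simp: initial_letter_def)

lemma initial_letter_append:
  "initial_letter E (xs @ ys) a
     \<longleftrightarrow> initial_letter E xs a \<or> (a \<notin> set xs \<and> (\<forall>c\<in>set xs. E c a) \<and> initial_letter E ys a)"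
  by (induction xs) (auto simp: initial_letter_Cons)

lemma initial_letter_in_set: "initial_letter E w a \<Longrightarrow> a \<in> set w"
  by (simp add: initial_letter_def)

lemma trace_eq_move_initial_letter:
  "initial_letter E w a \<Longrightarrow> trace_eq E w (a # remove1 a w)"
proof (induction w)
  case (Cons c w)
  show ?case
  proof (cases "c = a")
    case False
    then have "E c a" and "initial_letter E w a" using Cons.prems by (auto simp: initial_letter_Cons)
    have "trace_eq E (c # w) (c # a # remove1 a w)" using Cons.IH[OF \<open>initial_letter E w a\<close>]
      by (rule trace_eq_Cons)
    moreover have "swap_step E ([] @ [c, a] @ remove1 a w) ([] @ [a, c] @ remove1 a w)"
      unfolding swap_step_def using \<open>E c a\<close> by blast
    ultimately show ?thesis using False unfolding trace_eq_def by simp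
  qed simp
qed simp

lemma is_clique_subset: "is_clique E S \<Longrightarrow> K \<subseteq> S \<Longrightarrow> is_clique E K"
  unfolding is_clique_def by blast

lemma initial_letter_clique_word:
  assumes "is_clique E (set l)" and "u \<in> set l"
  shows "initial_letter E l u"
  using assms set_takeWhileD[of _ "\<lambda>x. x \<noteq> u" l]
  unfolding initial_letter_def is_clique_def by blast

locale simple_graph =
  fixes E :: "nat \<Rightarrow> nat \<Rightarrow> bool"
  assumes sym: "E i j \<Longrightarrow> E j i"
    and irrefl: "\<not> E i i"
begin

lemma trace_eq_sym:
  assumes "trace_eq E u v"
  shows "trace_eq E v u"
proof -
  have step: "swap_step E y x" if "swap_step E x y" for x y
    using that sym unfolding swap_step_def by blast
  show ?thesis
    using assms unfolding trace_eq_def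
    by (induction rule: rtranclp_induct) (auto intro: converse_rtranclp_into_rtranclp step)
qed

lemma trace_eq_initial_letter:
  assumes "trace_eq E u v"
  shows "initial_letter E u a = initial_letter E v a"
proof -
  have step: "initial_letter E x a = initial_letter E y a" if st: "swap_step E x y" for x y
  proof -
    obtain xs ys b c where x: "x = xs @ [b, c] @ ys" and y: "y = xs @ [c, b] @ ys" and "E b c"
      using st unfolding swap_step_def by blast
    then have "initial_letter E (b # c # ys) a = initial_letter E (c # b # ys) a"
      using sym irrefl unfolding initial_letter_Cons by blast
    then show ?thesis unfolding x y by (simp only: append_Cons append_Nil initial_letter_append)
  qed
  show ?thesis
    using assms unfolding trace_eq_def by (induction rule: rtranclp_induct) (auto simp: step)
qed

lemma trace_eq_remove1:
  assumes "trace_eq E u v"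
  shows "trace_eq E (remove1 a u) (remove1 a v)"
proof -
  have step: "trace_eq E (remove1 a x) (remove1 a y)" if st: "swap_step E x y" for x y
  proof -
    obtain xs ys b c where x: "x = xs @ [b, c] @ ys" and y: "y = xs @ [c, b] @ ys" and "E b c"
      using st unfolding swap_step_def by blast
    then have "b \<noteq> c" using irrefl by auto
    consider "a \<in> set xs" | "a \<notin> set xs" "a = b \<or> a = c" | "a \<notin> set xs" "a \<noteq> b" "a \<noteq> c" by blast
    then show ?thesis
    proof cases
      case 1
      then have "swap_step E (remove1 a x) (remove1 a y)"
        unfolding x y swap_step_def using \<open>E b c\<close> by (auto simp: remove1_append)
      then show ?thesis unfolding trace_eq_def by simp
    next
      case 2
      then show ?thesis using \<open>b \<noteq> c\<close> by (auto simp: x y remove1_append)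
    next
      case 3
      then have "swap_step E (remove1 a x) (remove1 a y)"
        unfolding x y swap_step_def using \<open>E b c\<close> by (auto simp: remove1_append)
      then show ?thesis unfolding trace_eq_def by simp
    qed
  qed
  show ?thesis
    using assms step unfolding trace_eq_def
    by (induction rule: rtranclp_induct) (auto intro: rtranclp_trans)
qed

lemma trace_eq_Cons_cancel: "trace_eq E (a # u) (a # v) \<Longrightarrow> trace_eq E u v"
  using trace_eq_remove1[of "a # u" "a # v" a] by simp

lemma initial_letters_adjacent:
  "initial_letter E w u \<Longrightarrow> initial_letter E w v \<Longrightarrow> u \<noteq> v \<Longrightarrow> E u v"
proof (induction w)
  case (Cons c w)
  then show ?case unfolding initial_letter_Cons by (metis sym)
qed simp

lemma is_clique_Un:
  "is_clique E (K \<union> U) \<longleftrightarrow> is_clique E K \<and> is_clique E U \<and> (\<forall>k\<in>K. \<forall>u\<in>U. k \<noteq> u \<longrightarrow> E k u)"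
proof -
  have "(\<forall>k\<in>K. \<forall>u\<in>U. k \<noteq> u \<longrightarrow> E k u) \<longleftrightarrow> (\<forall>u\<in>U. \<forall>k\<in>K. u \<noteq> k \<longrightarrow> E u k)"
    by (metis sym)
  then show ?thesis unfolding is_clique_def by auto
qed

lemma trace_eq_clique_words:
  "distinct l1 \<Longrightarrow> distinct l2 \<Longrightarrow> set l1 = set l2 \<Longrightarrow> is_clique E (set l1) \<Longrightarrow> trace_eq E l1 l2"
proof (induction l1 arbitrary: l2)
  case (Cons a l1)
  have "is_clique E (set l2)" "a \<in> set l2" using Cons.prems(3,4) by auto
  then have "initial_letter E l2 a" by (rule initial_letter_clique_word)
  then have "trace_eq E (a # remove1 a l2) l2" by (rule trace_eq_sym[OF trace_eq_move_initial_letter])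
  moreover have "set l1 = set (remove1 a l2)"
    using Cons.prems(1-3) by (metis Diff_insert_absorb distinct.simps(2) list.set(2) set_remove1_eq)
  then have "trace_eq E l1 (remove1 a l2)"
    using Cons.prems(1,2,4) is_clique_subset[of E "set (a # l1)" "set l1"] by (intro Cons.IH) auto
  ultimately show ?case using trace_eq_Cons trace_eq_trans by blast
qed simp

lemma left_div_refl: "q \<in> words n \<Longrightarrow> left_div n E q q"
  unfolding left_div_def by (intro bexI[of _ "[]"]) (auto simp: words_def)

lemma left_div_antisym:
  assumes "left_div n E p q" and "left_div n E q p"
  shows "trace_eq E p q"
proof -
  obtain r r' where r: "trace_eq E (p @ r) q" and r': "trace_eq E (q @ r') p"
    using assms unfolding left_div_def by blast
  then have "length (p @ r) = length q" "length (q @ r') = length p" by (metis trace_eq_length)+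
  then have "r = []" by (cases r) auto
  then show ?thesis using r by simp
qed

lemma is_join_unique: "is_join n E U r \<Longrightarrow> is_join n E U r' \<Longrightarrow> trace_eq E r r'"
  unfolding is_join_def by (meson left_div_antisym left_div_refl)

lemma left_div_singleton_iff:
  assumes "q \<in> words n"
  shows "left_div n E [u] q \<longleftrightarrow> initial_letter E q u"
proof
  assume "left_div n E [u] q"
  then obtain r where "trace_eq E ([u] @ r) q" unfolding left_div_def by blast
  then show "initial_letter E q u"
    using trace_eq_initial_letter initial_letter_Cons by fastforce
next
  assume "initial_letter E q u"
  then have "trace_eq E ([u] @ remove1 u q) q" using trace_eq_sym[OF trace_eq_move_initial_letter] by simp
  then show "left_div n E [u] q" using assms remove1_words unfolding left_div_def by blast
qed

lemma left_div_clique_word_iff: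
  assumes "distinct l" and "is_clique E (set l)" and "q \<in> words n"
  shows "left_div n E l q \<longleftrightarrow> (\<forall>u\<in>set l. initial_letter E q u)"
  using assms
proof (induction l arbitrary: q)
  case Nil
  then show ?case unfolding left_div_def by (auto intro: bexI[of _ q])
next
  case (Cons a l)
  show ?case
  proof
    assume "left_div n E (a # l) q"
    then obtain r where r: "trace_eq E ((a # l) @ r) q" unfolding left_div_def by blast
    have "initial_letter E ((a # l) @ r) u" if "u \<in> set (a # l)" for u
      using initial_letter_clique_word[OF Cons.prems(2) that] initial_letter_append[of E "a # l" r u]
      by blast
    then show "\<forall>u\<in>set (a # l). initial_letter E q u"
      using trace_eq_initial_letter[OF r] by blast
  next
    assume initial: "\<forall>u\<in>set (a # l). initial_letter E q u"
    define q' where "q' = remove1 a q"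
    have q: "trace_eq E q (a # q')"
      unfolding q'_def using initial by (simp add: trace_eq_move_initial_letter)
    have "initial_letter E q' u" if "u \<in> set l" for u
      using initial that Cons.prems(1) trace_eq_initial_letter[OF q, of u]
      by (auto simp: initial_letter_Cons)
    moreover have "distinct l" "is_clique E (set l)" using Cons.prems(1,2) by (auto simp: is_clique_def)
    ultimately have "left_div n E l q'"
      using Cons.IH Cons.prems(3) remove1_words by (simp add: q'_def)
    then obtain r where r: "r \<in> words n" "trace_eq E (l @ r) q'" unfolding left_div_def by blast
    then have "trace_eq E ((a # l) @ r) q"
      using trace_eq_Cons[OF r(2)] trace_eq_sym[OF q] by (auto intro: trace_eq_trans)
    then show "left_div n E (a # l) q" using r(1) unfolding left_div_def by blast
  qed
qed

lemma singletons_left_div_iff: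
  "q \<in> words n \<Longrightarrow> (\<forall>p\<in>(\<lambda>i. [i]) ` U. left_div n E p q) \<longleftrightarrow> (\<forall>u\<in>U. initial_letter E q u)"
  by (simp add: left_div_singleton_iff)

lemma is_join_singletons_clique:
  assumes "U \<subseteq> {1..n}" and "is_clique E U"
  shows "is_join n E ((\<lambda>i. [i]) ` U) (sorted_list_of_set U)"
proof -
  have "finite U" using assms(1) finite_subset by blast
  then have "sorted_list_of_set U \<in> words n" using assms(1) by (simp add: words_def)
  moreover have "(\<forall>p\<in>(\<lambda>i. [i]) ` U. left_div n E p q) \<longleftrightarrow> left_div n E (sorted_list_of_set U) q"
    if "q \<in> words n" for q
    using \<open>finite U\<close> assms(2) that left_div_clique_word_iff[of "sorted_list_of_set U" q]
      singletons_left_div_iff[OF that]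
    by simp
  ultimately show ?thesis unfolding is_join_def by blast
qed

lemma is_join_singletons_imp_clique:
  assumes "is_join n E ((\<lambda>i. [i]) ` U) r"
  shows "is_clique E U"
proof -
  have "r \<in> words n" using assms by (simp add: is_join_def)
  then have "\<forall>u\<in>U. initial_letter E r u"
    using assms left_div_refl singletons_left_div_iff unfolding is_join_def by blast
  then show ?thesis unfolding is_clique_def using initial_letters_adjacent by blast
qed

end

section \<open>Monoid elements avoiding given initial letters\<close>

definition trace_class :: "(nat \<Rightarrow> nat \<Rightarrow> bool) \<Rightarrow> nat list \<Rightarrow> nat list set" where
  "trace_class E w = {v. trace_eq E w v}"

definition class_rep :: "'a set \<Rightarrow> 'a" where
  "class_rep X = (SOME w. w \<in> X)"

lemma monoid_elems_len_eq: "monoid_elems_len n E m = trace_class E ` {w \<in> words n. length w = m}"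
  unfolding monoid_elems_len_def quotient_def trace_class_def by auto

lemma finite_monoid_elems_len: "finite (monoid_elems_len n E m)"
proof -
  have "{w \<in> words n. length w = m} \<subseteq> {w. set w \<subseteq> {1..n} \<and> length w = m}"
    by (auto simp: words_def)
  then have "finite {w \<in> words n. length w = m}"
    using finite_lists_length_eq[of "{1..n}" m] by (auto intro: finite_subset)
  then show ?thesis by (simp add: monoid_elems_len_eq)
qed

lemma trace_eq_class_rep: "trace_eq E w (class_rep (trace_class E w))"
proof -
  have "class_rep (trace_class E w) \<in> trace_class E w"
    unfolding class_rep_def by (rule someI[of _ w]) (simp add: trace_class_def)
  then show ?thesis by (simp add: trace_class_def)
qed

context simple_graph
begin

lemma trace_class_eqI: "trace_eq E u v \<Longrightarrow> trace_class E u = trace_class E v"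
  unfolding trace_class_def using trace_eq_sym trace_eq_trans by blast

lemma trace_class_eq_iff: "trace_class E u = trace_class E v \<longleftrightarrow> trace_eq E u v"
proof
  assume "trace_class E u = trace_class E v"
  moreover have "v \<in> trace_class E v" by (simp add: trace_class_def)
  ultimately have "v \<in> trace_class E u" by simp
  then show "trace_eq E u v" by (simp add: trace_class_def)
qed (rule trace_class_eqI)

lemma monoid_elem_rep:
  assumes "X \<in> monoid_elems_len n E m"
  shows "class_rep X \<in> words n" and "length (class_rep X) = m" and "trace_class E (class_rep X) = X"
proof -
  obtain w where w: "w \<in> words n" "length w = m" "X = trace_class E w"
    using assms by (auto simp: monoid_elems_len_eq)
  then have "trace_eq E w (class_rep X)" using trace_eq_class_rep by simp
  then show "class_rep X \<in> words n" "length (class_rep X) = m" "trace_class E (class_rep X) = X"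
    using w trace_eq_words trace_eq_length trace_class_eqI by metis+
qed

lemma monoid_elems_len_memI:
  "w \<in> words n \<Longrightarrow> trace_class E w \<in> monoid_elems_len n E (length w)"
  by (simp add: monoid_elems_len_eq)

definition least_initial_letter :: "(nat \<Rightarrow> nat) \<Rightarrow> nat list \<Rightarrow> nat \<Rightarrow> bool" where
  "least_initial_letter rk w a \<longleftrightarrow> initial_letter E w a \<and> (\<forall>b. initial_letter E w b \<longrightarrow> rk a \<le> rk b)"

definition blocked :: "(nat \<Rightarrow> nat) \<Rightarrow> nat set \<Rightarrow> nat \<Rightarrow> nat set" where
  "blocked rk B a = {b. E a b \<and> (b \<in> B \<or> rk b < rk a)}"

lemma least_initial_letter_exists:
  assumes "w \<noteq> []"
  obtains a where "least_initial_letter rk w a"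
proof -
  have "initial_letter E w (hd w)" using assms by (cases w) (auto simp: initial_letter_Cons)
  then show ?thesis
    using ex_has_least_nat[of "initial_letter E w" "hd w" rk] that
    unfolding least_initial_letter_def by blast
qed

lemma least_initial_letter_unique:
  assumes "least_initial_letter rk w a" and "least_initial_letter rk w a'"
    and "w \<in> words n" and "inj_on rk {1..n}"
  shows "a = a'"
proof -
  have "a \<in> set w" "a' \<in> set w" "rk a = rk a'"
    using assms(1,2) initial_letter_in_set unfolding least_initial_letter_def by (blast, blast, force)
  then show ?thesis using assms(3,4) by (auto simp: words_def dest: inj_onD)
qed

lemma trace_eq_least_initial_letter:
  "trace_eq E u v \<Longrightarrow> least_initial_letter rk u a \<longleftrightarrow> least_initial_letter rk v a"
  unfolding least_initial_letter_def using trace_eq_initial_letter by simp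

lemma least_initial_letter_Cons_iff:
  assumes "a \<notin> B"
  shows "(\<forall>b\<in>B. \<not> initial_letter E (a # u) b) \<and> least_initial_letter rk (a # u) a
    \<longleftrightarrow> (\<forall>b\<in>blocked rk B a. \<not> initial_letter E u b)"
  using assms by (auto simp: least_initial_letter_def blocked_def initial_letter_Cons not_less)

end

locale graph_on_vertices = simple_graph +
  fixes n :: nat
  assumes edge_vertices: "E i j \<Longrightarrow> i \<in> {1..n} \<and> j \<in> {1..n}"

context graph_on_vertices
begin

definition avoiding_elems :: "nat \<Rightarrow> nat set \<Rightarrow> nat list set set" where
  "avoiding_elems m B = {X \<in> monoid_elems_len n E m. \<forall>b\<in>B. \<not> initial_letter E (class_rep X) b}"

lemma avoiding_elems_Cons_iff:
  assumes "a \<in> {1..n} - B" and "Y \<in> monoid_elems_len n E k"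
  shows "Y \<in> avoiding_elems k (blocked rk B a)
    \<longleftrightarrow> (\<forall>b\<in>B. \<not> initial_letter E (a # class_rep Y) b) \<and> least_initial_letter rk (a # class_rep Y) a"
  using assms least_initial_letter_Cons_iff[of a B] by (simp add: avoiding_elems_def)

lemma prepend_least_initial_letter_inj:
  assumes "inj_on rk {1..n}"
    and a: "a \<in> {1..n} - B" "Y \<in> avoiding_elems k (blocked rk B a)"
    and a': "a' \<in> {1..n} - B" "Y' \<in> avoiding_elems k (blocked rk B a')"
    and eq: "trace_class E (a # class_rep Y) = trace_class E (a' # class_rep Y')"
  shows "a = a' \<and> Y = Y'"
proof -
  have Y: "Y \<in> monoid_elems_len n E k" "Y' \<in> monoid_elems_len n E k"
    using a(2) a'(2) by (simp_all add: avoiding_elems_def)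
  have tr: "trace_eq E (a # class_rep Y) (a' # class_rep Y')"
    using eq by (simp add: trace_class_eq_iff)
  have least: "least_initial_letter rk (a # class_rep Y) a"
    using avoiding_elems_Cons_iff[OF a(1) Y(1)] a(2) by simp
  have "least_initial_letter rk (a' # class_rep Y') a'"
    using avoiding_elems_Cons_iff[OF a'(1) Y(2)] a'(2) by simp
  then have "least_initial_letter rk (a # class_rep Y) a'"
    using trace_eq_least_initial_letter[OF tr] by simp
  moreover have "a # class_rep Y \<in> words n"
    using a(1) monoid_elem_rep(1)[OF Y(1)] by (simp add: words_def)
  ultimately have "a = a'" using least_initial_letter_unique[OF least _ _ assms(1)] by simp
  then have "trace_class E (class_rep Y) = trace_class E (class_rep Y')"
    using trace_eq_Cons_cancel tr by (simp add: trace_class_eq_iff)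
  then show "a = a' \<and> Y = Y'" using \<open>a = a'\<close> monoid_elem_rep(3)[OF Y(1)] monoid_elem_rep(3)[OF Y(2)] by simp
qed

lemma inj_on_prepend_least_initial_letter:
  assumes "inj_on rk {1..n}"
  shows "inj_on (\<lambda>(a, Y). trace_class E (a # class_rep Y))
    (SIGMA a:{1..n} - B. avoiding_elems k (blocked rk B a))"
  by (intro inj_onI) (clarify, rule prepend_least_initial_letter_inj[OF assms], auto)

lemma prepend_least_initial_letter_image:
  "(\<lambda>(a, Y). trace_class E (a # class_rep Y)) ` (SIGMA a:{1..n} - B. avoiding_elems k (blocked rk B a))
     \<subseteq> avoiding_elems (Suc k) B"
proof
  fix X
  assume "X \<in> (\<lambda>(a, Y). trace_class E (a # class_rep Y)) ` (SIGMA a:{1..n} - B. avoiding_elems k (blocked rk B a))"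
  then obtain a Y where a: "a \<in> {1..n} - B" and Y: "Y \<in> avoiding_elems k (blocked rk B a)"
    and X: "X = trace_class E (a # class_rep Y)"
    by blast
  then have "Y \<in> monoid_elems_len n E k" by (simp add: avoiding_elems_def)
  then have w: "a # class_rep Y \<in> words n" "length (a # class_rep Y) = Suc k"
    using a monoid_elem_rep[of Y] by (auto simp: words_def)
  have "\<forall>b\<in>B. \<not> initial_letter E (a # class_rep Y) b"
    using avoiding_elems_Cons_iff a Y \<open>Y \<in> monoid_elems_len n E k\<close> by blast
  then show "X \<in> avoiding_elems (Suc k) B"
    unfolding X using monoid_elems_len_memI[OF w(1)] w(2) trace_eq_initial_letter[OF trace_eq_class_rep]
    by (simp add: avoiding_elems_def)
qed

lemma avoiding_elems_Suc_prepend: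
  assumes "X \<in> avoiding_elems (Suc k) B"
  shows "X \<in> (\<lambda>(a, Y). trace_class E (a # class_rep Y)) ` (SIGMA a:{1..n} - B. avoiding_elems k (blocked rk B a))"
proof -
  define v where "v = class_rep X"
  have X: "X \<in> monoid_elems_len n E (Suc k)" and avoid: "\<forall>b\<in>B. \<not> initial_letter E v b"
    using assms by (simp_all add: avoiding_elems_def v_def)
  then have v: "v \<in> words n" "length v = Suc k" "trace_class E v = X"
    using monoid_elem_rep unfolding v_def by blast+
  have "v \<noteq> []" using v(2) by auto
  then obtain a where least: "least_initial_letter rk v a" by (rule least_initial_letter_exists)
  then have "initial_letter E v a" by (simp add: least_initial_letter_def)
  then have va: "trace_eq E v (a # remove1 a v)" by (rule trace_eq_move_initial_letter)
  have a: "a \<in> {1..n} - B"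
    using v(1) avoid initial_letter_in_set[OF \<open>initial_letter E v a\<close>] \<open>initial_letter E v a\<close>
    by (auto simp: words_def)
  define Y where "Y = trace_class E (remove1 a v)"
  have Y: "Y \<in> monoid_elems_len n E k"
    using monoid_elems_len_memI[OF remove1_words[OF v(1), of a]] v(2) initial_letter_in_set[OF \<open>initial_letter E v a\<close>]
    by (simp add: Y_def length_remove1)
  have tr: "trace_eq E v (a # class_rep Y)"
    using trace_eq_trans[OF va trace_eq_Cons[OF trace_eq_class_rep]] by (simp add: Y_def)
  then have "\<forall>b\<in>B. \<not> initial_letter E (a # class_rep Y) b"
    using avoid trace_eq_initial_letter[OF tr] by simp
  moreover have "least_initial_letter rk (a # class_rep Y) a"
    using least trace_eq_least_initial_letter[OF tr] by simp
  ultimately have "Y \<in> avoiding_elems k (blocked rk B a)"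
    using avoiding_elems_Cons_iff[OF a Y] by simp
  moreover have "X = trace_class E (a # class_rep Y)" using trace_class_eqI[OF tr] v(3) by simp
  ultimately show ?thesis using a by blast
qed

lemma bij_betw_prepend_least_initial_letter:
  assumes "inj_on rk {1..n}"
  shows "bij_betw (\<lambda>(a, Y). trace_class E (a # class_rep Y))
    (SIGMA a:{1..n} - B. avoiding_elems k (blocked rk B a)) (avoiding_elems (Suc k) B)"
  using inj_on_prepend_least_initial_letter[OF assms] prepend_least_initial_letter_image
    avoiding_elems_Suc_prepend
  by (intro bij_betw_imageI) blast+

end

section \<open>Alternating sums over cliques\<close>

lemma sum_Pow_toggle_cancel:
  fixes f :: "'a set \<Rightarrow> 'b::ab_group_add"
  assumes "finite S" and "b \<in> S" and toggle: "\<And>K. K \<subseteq> S - {b} \<Longrightarrow> f (insert b K) = - f K"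
  shows "(\<Sum>K\<in>Pow S. f K) = 0"
proof -
  define A where "A = S - {b}"
  have S: "S = insert b A" "b \<notin> A" "finite A" using assms(1,2) by (auto simp: A_def)
  have "inj_on (insert b) (Pow A)"
  proof (rule inj_onI)
    fix K L assume "K \<in> Pow A" "L \<in> Pow A" "insert b K = insert b L"
    then have "K = insert b K - {b}" "L = insert b L - {b}" using S(2) by auto
    then show "K = L" using \<open>insert b K = insert b L\<close> by simp
  qed
  moreover have "Pow A \<inter> insert b ` Pow A = {}" using S(2) by blast
  ultimately have "(\<Sum>K\<in>Pow S. f K) = (\<Sum>K\<in>Pow A. f K) + (\<Sum>K\<in>Pow A. f (insert b K))"
    using S by (simp add: Pow_insert sum.union_disjoint sum.reindex)
  also have "(\<Sum>K\<in>Pow A. f (insert b K)) = (\<Sum>K\<in>Pow A. - f K)"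
    using toggle by (intro sum.cong) (auto simp: A_def)
  finally show ?thesis by (simp add: sum_negf)
qed

lemma neg_one_power_card_Diff_insert:
  assumes "finite S" and "b \<in> S" and "K \<subseteq> S - {b}"
  shows "(-1::'a::ring_1) ^ card (S - insert b K) = - ((-1) ^ card (S - K))"
proof -
  have "S - K = insert b (S - insert b K)" using assms(2,3) by auto
  then have "card (S - K) = card (insert b (S - insert b K))" by (rule arg_cong)
  also have "\<dots> = Suc (card (S - insert b K))" using assms(1) by (intro card_insert_disjoint) auto
  finally show ?thesis by simp
qed

lemma sum_Pow_neg_one_power_card_Diff:
  assumes "finite S"
  shows "(\<Sum>K\<in>Pow S. (-1::'a::ring_1) ^ card (S - K)) = (if S = {} then 1 else 0)"
proof (cases "S = {}")
  case False
  then obtain b where "b \<in> S" by blast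
  have "(\<Sum>K\<in>Pow S. (-1::'a) ^ card (S - K)) = 0"
    using neg_one_power_card_Diff_insert[OF assms \<open>b \<in> S\<close>] by (intro sum_Pow_toggle_cancel[OF assms \<open>b \<in> S\<close>])
  then show ?thesis using False by simp
qed simp

lemma sum_Pow_neg_one_power_card_Diff_Int:
  fixes \<phi> :: "'a set \<Rightarrow> 'b::ring_1"
  assumes "finite S" and "\<not> S \<subseteq> N"
  shows "(\<Sum>K\<in>Pow S. (-1) ^ card (S - K) * \<phi> (K \<inter> N)) = 0"
proof -
  obtain b where b: "b \<in> S" "b \<notin> N" using assms(2) by blast
  show ?thesis
  proof (rule sum_Pow_toggle_cancel[OF assms(1) b(1)])
    fix K assume "K \<subseteq> S - {b}"
    have "insert b K \<inter> N = K \<inter> N" using b(2) by auto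
    then show "(-1) ^ card (S - insert b K) * \<phi> (insert b K \<inter> N) = - ((-1) ^ card (S - K) * \<phi> (K \<inter> N))"
      by (simp only: neg_one_power_card_Diff_insert[OF assms(1) b(1) \<open>K \<subseteq> S - {b}\<close>] mult_minus_left)
  qed
qed

context simple_graph
begin

definition cliques_in :: "nat set \<Rightarrow> nat set set" where
  "cliques_in C = {K. K \<subseteq> C \<and> is_clique E K}"

definition common_nbrs :: "nat set \<Rightarrow> nat set \<Rightarrow> nat set" where
  "common_nbrs C K = {j \<in> C. \<forall>k\<in>K. E j k}"

text \<open>For \<open>y S = \<parallel>T\<^sub>S\<^sup>* g\<parallel>\<^sup>2\<close> this is the weak Brehmer expression
  \<open>\<langle>\<Sum>\<^sub>U (-1)\<^bsup>|U|\<^esup> T\<^sub>U T\<^sub>U\<^sup>* h, h\<rangle>\<close> at \<open>h = T\<^sub>K\<^sup>* g\<close>.\<close>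

definition brehmer_sum :: "nat set \<Rightarrow> (nat set \<Rightarrow> real) \<Rightarrow> nat set \<Rightarrow> real" where
  "brehmer_sum C y K = (\<Sum>U \<in> cliques_in (common_nbrs C K). (-1) ^ card U * y (K \<union> U))"

lemma finite_cliques_in: "finite C \<Longrightarrow> finite (cliques_in C)"
  unfolding cliques_in_def by (rule finite_subset[of _ "Pow C"]) auto

lemma empty_in_cliques_in [simp]: "{} \<in> cliques_in C"
  by (simp add: cliques_in_def is_clique_def)

lemma cliques_in_split_iff:
  assumes "K \<subseteq> S"
  shows "S \<in> cliques_in C \<longleftrightarrow> K \<in> cliques_in C \<and> S - K \<in> cliques_in (common_nbrs C K)"
proof -
  have cross: "(\<forall>k\<in>K. \<forall>u\<in>S - K. k \<noteq> u \<longrightarrow> E k u) \<longleftrightarrow> (\<forall>j\<in>S - K. \<forall>k\<in>K. E j k)"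
    by (metis DiffD2 sym)
  have "is_clique E S \<longleftrightarrow> is_clique E K \<and> is_clique E (S - K) \<and> (\<forall>k\<in>K. \<forall>u\<in>S - K. k \<noteq> u \<longrightarrow> E k u)"
    using is_clique_Un[of K "S - K"] assms by (simp add: Un_absorb1)
  moreover have "S \<subseteq> C \<longleftrightarrow> K \<subseteq> C \<and> S - K \<subseteq> C" using assms by blast
  ultimately show ?thesis unfolding cliques_in_def common_nbrs_def cross by blast
qed

lemma cliques_in_common_nbrs_disjoint: "U \<in> cliques_in (common_nbrs C K) \<Longrightarrow> K \<inter> U = {}"
  using irrefl by (auto simp: cliques_in_def common_nbrs_def)

lemma sum_cliques_in_common_nbrs_reindex:
  assumes "finite C"
  shows "(\<Sum>K\<in>cliques_in C. \<Sum>U\<in>cliques_in (common_nbrs C K). F K U)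
    = (\<Sum>S\<in>cliques_in C. \<Sum>K\<in>Pow S. F K (S - K))"
proof -
  have fin: "finite S" if "S \<in> cliques_in C" for S
    using that assms finite_subset by (auto simp: cliques_in_def)
  have bij: "bij_betw (\<lambda>(S, K). (K, S - K)) (SIGMA S:cliques_in C. Pow S)
      (SIGMA K:cliques_in C. cliques_in (common_nbrs C K))"
  proof (rule bij_betw_byWitness[where f'="\<lambda>(K, U). (K \<union> U, K)"])
    show "\<forall>p\<in>SIGMA K:cliques_in C. cliques_in (common_nbrs C K).
        (\<lambda>(S, K). (K, S - K)) ((\<lambda>(K, U). (K \<union> U, K)) p) = p"
      using cliques_in_common_nbrs_disjoint by auto
    show "(\<lambda>(S, K). (K, S - K)) ` (SIGMA S:cliques_in C. Pow S)
        \<subseteq> (SIGMA K:cliques_in C. cliques_in (common_nbrs C K))"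
    proof -
      have "K \<in> cliques_in C \<and> S - K \<in> cliques_in (common_nbrs C K)"
        if "S \<in> cliques_in C" "K \<subseteq> S" for S K
        using cliques_in_split_iff[OF that(2)] that(1) by blast
      then show ?thesis by auto
    qed
    have "K \<union> U \<in> cliques_in C" if "K \<in> cliques_in C" "U \<in> cliques_in (common_nbrs C K)" for K U
    proof -
      have "K \<union> U - K = U" using cliques_in_common_nbrs_disjoint[OF that(2)] by blast
      then show ?thesis using cliques_in_split_iff[of K "K \<union> U" C] that by simp
    qed
    then show "(\<lambda>(K, U). (K \<union> U, K)) ` (SIGMA K:cliques_in C. cliques_in (common_nbrs C K))
        \<subseteq> (SIGMA S:cliques_in C. Pow S)"
      by auto
  qed auto
  have fin': "finite (cliques_in (common_nbrs C K))" for K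
    using assms by (intro finite_cliques_in) (simp add: common_nbrs_def)
  have "(\<Sum>K\<in>cliques_in C. \<Sum>U\<in>cliques_in (common_nbrs C K). F K U)
      = (\<Sum>(K, U)\<in>(SIGMA K:cliques_in C. cliques_in (common_nbrs C K)). F K U)"
    using fin' by (intro sum.Sigma finite_cliques_in[OF assms]) blast
  also have "\<dots> = (\<Sum>p\<in>(SIGMA S:cliques_in C. Pow S). (\<lambda>(K, U). F K U) ((\<lambda>(S, K). (K, S - K)) p))"
    by (rule sum.reindex_bij_betw[OF bij, symmetric])
  also have "\<dots> = (\<Sum>(S, K)\<in>(SIGMA S:cliques_in C. Pow S). F K (S - K))"
    by (simp add: case_prod_beta)
  also have "\<dots> = (\<Sum>S\<in>cliques_in C. \<Sum>K\<in>Pow S. F K (S - K))"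
    using fin by (intro sum.Sigma[symmetric] finite_cliques_in[OF assms]) blast
  finally show ?thesis .
qed

lemma brehmer_sum_expansion:
  assumes "finite C"
  shows "(\<Sum>K\<in>cliques_in C. brehmer_sum C y K * \<phi> K)
    = (\<Sum>S\<in>cliques_in C. y S * (\<Sum>K\<in>Pow S. (-1) ^ card (S - K) * \<phi> K))"
proof -
  have "(\<Sum>K\<in>cliques_in C. brehmer_sum C y K * \<phi> K)
      = (\<Sum>K\<in>cliques_in C. \<Sum>U\<in>cliques_in (common_nbrs C K). (-1) ^ card U * y (K \<union> U) * \<phi> K)"
    by (simp add: brehmer_sum_def sum_distrib_right)
  also have "\<dots> = (\<Sum>S\<in>cliques_in C. \<Sum>K\<in>Pow S. (-1) ^ card (S - K) * y (K \<union> (S - K)) * \<phi> K)"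
    by (rule sum_cliques_in_common_nbrs_reindex[OF assms])
  also have "\<dots> = (\<Sum>S\<in>cliques_in C. \<Sum>K\<in>Pow S. y S * ((-1) ^ card (S - K) * \<phi> K))"
    by (intro sum.cong refl) (auto simp: Un_absorb1)
  finally show ?thesis by (simp add: sum_distrib_left)
qed

lemma sum_brehmer_sum:
  assumes "finite C"
  shows "(\<Sum>K\<in>cliques_in C. brehmer_sum C y K) = y {}"
proof -
  have "(\<Sum>K\<in>cliques_in C. brehmer_sum C y K)
      = (\<Sum>S\<in>cliques_in C. y S * (\<Sum>K\<in>Pow S. (-1) ^ card (S - K)))"
    using brehmer_sum_expansion[OF assms, of y "\<lambda>_. 1"] by simp
  also have "\<dots> = (\<Sum>S\<in>cliques_in C. if S = {} then y S else 0)"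
  proof (rule sum.cong[OF refl])
    fix S assume "S \<in> cliques_in C"
    then have "finite S" using assms finite_subset by (auto simp: cliques_in_def)
    then show "y S * (\<Sum>K\<in>Pow S. (-1) ^ card (S - K)) = (if S = {} then y S else 0)"
      by (simp add: sum_Pow_neg_one_power_card_Diff)
  qed
  finally show ?thesis using finite_cliques_in[OF assms] by simp
qed

lemma insert_cliques_in_common_nbrs_iff:
  assumes "a \<in> C"
  shows "J \<in> cliques_in (common_nbrs C {a}) \<longleftrightarrow> a \<notin> J \<and> insert a J \<in> cliques_in C"
proof -
  have "{a} \<in> cliques_in C" using assms by (simp add: cliques_in_def is_clique_def)
  moreover have "a \<notin> J" if "J \<in> cliques_in (common_nbrs C {a})"
    using that irrefl by (auto simp: cliques_in_def common_nbrs_def)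
  ultimately show ?thesis using cliques_in_split_iff[of "{a}" "insert a J" C] by auto
qed

lemma bij_betw_insert_cliques_in_common_nbrs:
  assumes "a \<in> C"
  shows "bij_betw (insert a) (cliques_in (common_nbrs C {a})) {K \<in> cliques_in C. a \<in> K}"
proof (rule bij_betw_byWitness[where f'="\<lambda>K. K - {a}"])
  note iff = insert_cliques_in_common_nbrs_iff[OF assms]
  show "\<forall>J\<in>cliques_in (common_nbrs C {a}). insert a J - {a} = J" using iff by simp
  show "\<forall>K\<in>{K \<in> cliques_in C. a \<in> K}. insert a (K - {a}) = K" by (simp add: insert_absorb)
  show "insert a ` cliques_in (common_nbrs C {a}) \<subseteq> {K \<in> cliques_in C. a \<in> K}" using iff by blast
  have "K - {a} \<in> cliques_in (common_nbrs C {a})" if "K \<in> cliques_in C" "a \<in> K" for K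
    using iff[of "K - {a}"] that by (simp add: insert_absorb)
  then show "(\<lambda>K. K - {a}) ` {K \<in> cliques_in C. a \<in> K} \<subseteq> cliques_in (common_nbrs C {a})" by blast
qed

lemma brehmer_sum_insert:
  assumes "J \<in> cliques_in (common_nbrs C {a})"
    and y': "\<And>S. S \<in> cliques_in (common_nbrs C {a}) \<Longrightarrow> y' S = y (insert a S)"
  shows "brehmer_sum C y (insert a J) = brehmer_sum (common_nbrs C {a}) y' J"
proof -
  have nbrs: "common_nbrs C (insert a J) = common_nbrs (common_nbrs C {a}) J"
    by (auto simp: common_nbrs_def)
  have "(-1) ^ card U * y (insert a J \<union> U) = (-1) ^ card U * y' (J \<union> U)"
    if "U \<in> cliques_in (common_nbrs (common_nbrs C {a}) J)" for U
  proof -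
    have "J \<union> U - J = U" using cliques_in_common_nbrs_disjoint[OF that] by blast
    then have "J \<union> U \<in> cliques_in (common_nbrs C {a})"
      using cliques_in_split_iff[of J "J \<union> U"] assms(1) that by simp
    then show ?thesis using y' by simp
  qed
  then show ?thesis unfolding brehmer_sum_def nbrs by (rule sum.cong[OF refl])
qed

lemma sum_cliques_in_alternating_Int:
  fixes y \<phi> :: "nat set \<Rightarrow> real"
  assumes "finite C" and "N \<subseteq> C"
  shows "(\<Sum>S\<in>cliques_in C. y S * (\<Sum>K\<in>Pow S. (-1) ^ card (S - K) * \<phi> (K \<inter> N)))
    = (\<Sum>S\<in>cliques_in N. y S * (\<Sum>K\<in>Pow S. (-1) ^ card (S - K) * \<phi> K))"
proof -
  have fin_clique: "finite S" if "S \<in> cliques_in C" for S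
    using that assms(1) finite_subset by (auto simp: cliques_in_def)
  have sub: "cliques_in N \<subseteq> cliques_in C" using assms(2) by (auto simp: cliques_in_def)
  have "(\<Sum>S\<in>cliques_in C. y S * (\<Sum>K\<in>Pow S. (-1) ^ card (S - K) * \<phi> (K \<inter> N)))
      = (\<Sum>S\<in>cliques_in N. y S * (\<Sum>K\<in>Pow S. (-1) ^ card (S - K) * \<phi> (K \<inter> N)))"
  proof (rule sum.mono_neutral_right[OF finite_cliques_in[OF assms(1)] sub], rule ballI)
    fix S assume "S \<in> cliques_in C - cliques_in N"
    then have "finite S" and "\<not> S \<subseteq> N" using fin_clique by (auto simp: cliques_in_def)
    then show "y S * (\<Sum>K\<in>Pow S. (-1) ^ card (S - K) * \<phi> (K \<inter> N)) = 0"
      by (simp add: sum_Pow_neg_one_power_card_Diff_Int)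
  qed
  also have "\<dots> = (\<Sum>S\<in>cliques_in N. y S * (\<Sum>K\<in>Pow S. (-1) ^ card (S - K) * \<phi> K))"
  proof (rule sum.cong[OF refl])
    fix S assume "S \<in> cliques_in N"
    then have "S \<subseteq> N" by (simp add: cliques_in_def)
    have "(\<Sum>K\<in>Pow S. (-1) ^ card (S - K) * \<phi> (K \<inter> N)) = (\<Sum>K\<in>Pow S. (-1) ^ card (S - K) * \<phi> K)"
    proof (rule sum.cong[OF refl])
      fix K assume "K \<in> Pow S"
      then have "K \<inter> N = K" using \<open>S \<subseteq> N\<close> by blast
      then show "(-1) ^ card (S - K) * \<phi> (K \<inter> N) = (-1) ^ card (S - K) * \<phi> K" by simp
    qed
    then show "y S * (\<Sum>K\<in>Pow S. (-1) ^ card (S - K) * \<phi> (K \<inter> N))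
        = y S * (\<Sum>K\<in>Pow S. (-1) ^ card (S - K) * \<phi> K)"
      by simp
  qed
  finally show ?thesis .
qed

text \<open>Applied with \<open>y S = \<parallel>T\<^sub>S\<^sup>* g\<parallel>\<^sup>2\<close> and \<open>y' S = \<parallel>T\<^sub>S\<^sup>* T\<^sub>a\<^sup>* g\<parallel>\<^sup>2\<close>: splitting off a prefix
  letter \<open>a\<close> replaces \<open>g\<close> by \<open>T\<^sub>a\<^sup>* g\<close>, and this identity trades that for a restriction to the
  cliques through \<open>a\<close>.\<close>

lemma brehmer_sum_shift:
  assumes "finite C" and "a \<in> C"
    and y': "\<And>S. S \<in> cliques_in (common_nbrs C {a}) \<Longrightarrow> y' S = y (insert a S)"
  shows "(\<Sum>K\<in>cliques_in C. brehmer_sum C y' K * \<phi> (K \<inter> common_nbrs C {a}))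
    = (\<Sum>K\<in>{K\<in>cliques_in C. a \<in> K}. brehmer_sum C y K * \<phi> (K - {a}))"
proof -
  define N where "N = common_nbrs C {a}"
  have "N \<subseteq> C" by (auto simp: N_def common_nbrs_def)
  then have "finite N" using assms(1) finite_subset by auto
  have "(\<Sum>K\<in>cliques_in C. brehmer_sum C y' K * \<phi> (K \<inter> N))
      = (\<Sum>S\<in>cliques_in C. y' S * (\<Sum>K\<in>Pow S. (-1) ^ card (S - K) * \<phi> (K \<inter> N)))"
    by (rule brehmer_sum_expansion[OF assms(1)])
  also have "\<dots> = (\<Sum>S\<in>cliques_in N. y' S * (\<Sum>K\<in>Pow S. (-1) ^ card (S - K) * \<phi> K))"
    using assms(1) \<open>N \<subseteq> C\<close> by (rule sum_cliques_in_alternating_Int)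
  also have "\<dots> = (\<Sum>J\<in>cliques_in N. brehmer_sum N y' J * \<phi> J)"
    by (rule brehmer_sum_expansion[OF \<open>finite N\<close>, symmetric])
  also have "\<dots> = (\<Sum>J\<in>cliques_in N. brehmer_sum C y (insert a J) * \<phi> (insert a J - {a}))"
  proof (rule sum.cong[OF refl])
    fix J assume J: "J \<in> cliques_in N"
    then have "insert a J - {a} = J" using insert_cliques_in_common_nbrs_iff[OF assms(2)] N_def by simp
    then show "brehmer_sum N y' J * \<phi> J = brehmer_sum C y (insert a J) * \<phi> (insert a J - {a})"
      using brehmer_sum_insert[of J C a y' y, OF J[unfolded N_def] y'] by (simp add: N_def)
  qed
  also have "\<dots> = (\<Sum>K\<in>{K\<in>cliques_in C. a \<in> K}. brehmer_sum C y K * \<phi> (K - {a}))"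
    unfolding N_def by (rule sum.reindex_bij_betw[OF bij_betw_insert_cliques_in_common_nbrs[OF assms(2)]])
  finally show ?thesis by (simp add: N_def)
qed

end

section \<open>Components of the complement graph\<close>

lemma compl_component_subset: "compl_component n E v \<subseteq> {1..n}"
  by (auto simp: compl_component_def)

context simple_graph
begin

definition clique_number_on :: "nat set \<Rightarrow> nat" where
  "clique_number_on S = Max {card K | K. K \<subseteq> S \<and> is_clique E K}"

lemma finite_clique_cards: "finite S \<Longrightarrow> finite {card K | K. K \<subseteq> S \<and> is_clique E K}"
  by (rule finite_subset[of _ "card ` Pow S"]) auto

lemma card_le_clique_number_on:
  "finite S \<Longrightarrow> K \<subseteq> S \<Longrightarrow> is_clique E K \<Longrightarrow> card K \<le> clique_number_on S"
  unfolding clique_number_on_def by (rule Max_ge[OF finite_clique_cards]) auto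

lemma clique_number_on_attained:
  assumes "finite S"
  obtains K where "K \<subseteq> S" and "is_clique E K" and "card K = clique_number_on S"
proof -
  have "card {} \<in> {card K | K. K \<subseteq> S \<and> is_clique E K}"
    by (auto simp: is_clique_def intro!: exI[of _ "{}"])
  then have "{card K | K. K \<subseteq> S \<and> is_clique E K} \<noteq> {}" by (rule ex_in_conv[THEN iffD1, OF exI])
  then have "clique_number_on S \<in> {card K | K. K \<subseteq> S \<and> is_clique E K}"
    unfolding clique_number_on_def by (rule Max_in[OF finite_clique_cards[OF assms]])
  then obtain K where K: "clique_number_on S = card K" "K \<subseteq> S" "is_clique E K" by auto
  show ?thesis by (rule that[OF K(2,3) K(1)[symmetric]])
qed

end

context graph_on_vertices
begin

definition compl_adj :: "nat \<Rightarrow> nat \<Rightarrow> bool" where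
  "compl_adj i j \<longleftrightarrow> i \<in> {1..n} \<and> j \<in> {1..n} \<and> i \<noteq> j \<and> \<not> E i j"

lemma mem_compl_component_iff: "u \<in> compl_component n E a \<longleftrightarrow> u \<in> {1..n} \<and> compl_adj\<^sup>*\<^sup>* a u"
  unfolding compl_component_def by (simp add: compl_adj_def[abs_def])

lemma compl_component_self: "a \<in> {1..n} \<Longrightarrow> a \<in> compl_component n E a"
  by (simp add: mem_compl_component_iff)

lemma compl_component_eq:
  assumes "b \<in> compl_component n E a"
  shows "compl_component n E b = compl_component n E a"
proof -
  have "symp compl_adj" using sym by (auto simp: symp_def compl_adj_def)
  then have "compl_adj\<^sup>*\<^sup>* b a" using assms by (auto simp: mem_compl_component_iff dest: sympD[OF symp_rtranclp])
  moreover have "compl_adj\<^sup>*\<^sup>* a b" using assms by (simp add: mem_compl_component_iff)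
  ultimately show ?thesis unfolding mem_compl_component_iff set_eq_iff
    by (meson rtranclp_trans)
qed

lemma edge_if_notin_compl_component:
  assumes "a \<in> {1..n}" and "b \<in> {1..n}" and "b \<notin> compl_component n E a"
  shows "E a b"
proof (rule ccontr)
  assume "\<not> E a b"
  moreover have "a \<noteq> b" using assms compl_component_self by auto
  ultimately have "compl_adj a b" using assms(1,2) by (simp add: compl_adj_def)
  then show False using assms(2,3) r_into_rtranclp[of compl_adj a b] by (simp add: mem_compl_component_iff)
qed

lemma finite_compl_component: "finite (compl_component n E a)"
  by (rule finite_subset[OF compl_component_subset]) simp

definition component_min :: "nat \<Rightarrow> nat" where
  "component_min a = Min (compl_component n E a)"

lemma component_min_in: "a \<in> {1..n} \<Longrightarrow> component_min a \<in> compl_component n E a"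
  unfolding component_min_def using finite_compl_component compl_component_self by (intro Min_in) auto

lemma component_min_le: "a \<in> {1..n} \<Longrightarrow> component_min a \<le> a"
  unfolding component_min_def using finite_compl_component compl_component_self by (intro Min_le) auto

lemma component_min_in_vertices: "a \<in> {1..n} \<Longrightarrow> component_min a \<in> {1..n}"
  using component_min_in compl_component_subset by blast

lemma component_min_eq: "b \<in> compl_component n E a \<Longrightarrow> component_min b = component_min a"
  unfolding component_min_def using compl_component_eq by simp

lemma component_min_idem: "a \<in> {1..n} \<Longrightarrow> component_min (component_min a) = component_min a"
  using component_min_eq[OF component_min_in] by blast

lemma component_min_eq_iff:
  assumes "a \<in> {1..n}" and "b \<in> {1..n}"
  shows "component_min b = component_min a \<longleftrightarrow> b \<in> compl_component n E a"
proof
  assume "component_min b = component_min a"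
  then have "compl_component n E a = compl_component n E b"
    using compl_component_eq[OF component_min_in[OF assms(1)]]
      compl_component_eq[OF component_min_in[OF assms(2)]] by simp
  then show "b \<in> compl_component n E a" using compl_component_self[OF assms(2)] by simp
qed (rule component_min_eq)

text \<open>Lexicographic: first by component, then by label.\<close>

definition vertex_rank :: "nat \<Rightarrow> nat" where
  "vertex_rank a = component_min a * (n + 1) + a"

lemma vertex_rank_less_iff:
  assumes "a \<in> {1..n}" and "b \<in> {1..n}"
  shows "vertex_rank b < vertex_rank a
    \<longleftrightarrow> component_min b < component_min a \<or> (component_min b = component_min a \<and> b < a)"
proof -
  have less: "x * (n + 1) + u < y * (n + 1) + v" if "x < y" "u \<le> n" for x y u v :: nat
  proof -
    have "(x + 1) * (n + 1) \<le> y * (n + 1)" using that(1) by (intro mult_le_mono1) simp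
    then show ?thesis using that(2) by (simp add: algebra_simps)
  qed
  consider "component_min b < component_min a" | "component_min b = component_min a"
    | "component_min a < component_min b" by linarith
  then show ?thesis
    using less[of "component_min b" "component_min a" b a] less[of "component_min a" "component_min b" a b] assms
    by cases (auto simp: vertex_rank_def)
qed

lemma inj_on_vertex_rank: "inj_on vertex_rank {1..n}"
proof (rule inj_onI)
  fix a b assume "a \<in> {1..n}" "b \<in> {1..n}" "vertex_rank a = vertex_rank b"
  then have "\<not> vertex_rank a < vertex_rank b" "\<not> vertex_rank b < vertex_rank a" by simp_all
  then show "a = b" using vertex_rank_less_iff[of a b] vertex_rank_less_iff[of b a] \<open>a \<in> {1..n}\<close> \<open>b \<in> {1..n}\<close>
    by (metis linorder_neqE_nat)
qed

definition vertices_before :: "nat \<Rightarrow> nat set" where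
  "vertices_before c = {b \<in> {1..n}. component_min b < c}"

definition vertices_from :: "nat \<Rightarrow> nat set" where
  "vertices_from c = {b \<in> {1..n}. c \<le> component_min b}"

lemma vertices_before_from_Suc_eq_if_not_root:
  assumes "\<not> (c \<in> {1..n} \<and> component_min c = c)"
  shows "vertices_before (Suc c) = vertices_before c" and "vertices_from (Suc c) = vertices_from c"
proof -
  have ne: "component_min b \<noteq> c" if "b \<in> {1..n}" for b
    using that assms component_min_idem component_min_in_vertices by metis
  show "vertices_before (Suc c) = vertices_before c" unfolding vertices_before_def
  proof (intro Collect_cong conj_cong refl)
    fix b assume "b \<in> {1..n}"
    then show "component_min b < Suc c \<longleftrightarrow> component_min b < c" using ne[of b] by linarith
  qed
  show "vertices_from (Suc c) = vertices_from c" unfolding vertices_from_def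
  proof (intro Collect_cong conj_cong refl)
    fix b assume "b \<in> {1..n}"
    then show "Suc c \<le> component_min b \<longleftrightarrow> c \<le> component_min b" using ne[of b] by linarith
  qed
qed

text \<open>Distinct components of the complement graph are completely joined in the graph itself,
  so a clique of one component and a clique of the later ones form a clique.\<close>

lemma clique_number_on_component_add_le:
  assumes "c \<in> {1..n}" and "component_min c = c"
  shows "clique_number_on (compl_component n E c) + clique_number_on (vertices_from (Suc c))
    \<le> clique_number_on (vertices_from c)"
proof -
  define C where "C = compl_component n E c"
  have fin: "finite C" "finite (vertices_from (Suc c))" "finite (vertices_from c)"
    by (simp_all add: C_def finite_compl_component vertices_from_def)
  obtain K1 where K1: "K1 \<subseteq> C" "is_clique E K1" "card K1 = clique_number_on C"
    using clique_number_on_attained[OF fin(1)] .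
  obtain K2 where K2: "K2 \<subseteq> vertices_from (Suc c)" "is_clique E K2"
    "card K2 = clique_number_on (vertices_from (Suc c))"
    using clique_number_on_attained[OF fin(2)] .
  have min_C: "component_min b = c" if "b \<in> C" for b
    using component_min_eq that assms(2) by (simp add: C_def)
  have C_V: "C \<subseteq> {1..n}" unfolding C_def by (rule compl_component_subset)
  have cross: "E i j" if "i \<in> K1" "j \<in> K2" for i j
  proof -
    have "i \<in> {1..n}" "j \<in> {1..n}" "component_min i = c" "c < component_min j"
      using that K1(1) K2(1) C_V min_C by (auto simp: vertices_from_def)
    moreover have "j \<notin> compl_component n E i"
      using component_min_eq[of j i] \<open>component_min i = c\<close> \<open>c < component_min j\<close> by auto
    ultimately show ?thesis using edge_if_notin_compl_component by blast
  qed
  have disj: "K1 \<inter> K2 = {}" using K1(1) K2(1) min_C by (force simp: vertices_from_def)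
  have "is_clique E (K1 \<union> K2)" using K1(2) K2(2) cross disj by (simp add: is_clique_Un)
  moreover have "K1 \<union> K2 \<subseteq> vertices_from c"
    using K1(1) K2(1) C_V min_C by (auto simp: vertices_from_def)
  ultimately have "card (K1 \<union> K2) \<le> clique_number_on (vertices_from c)"
    using card_le_clique_number_on[OF fin(3)] by blast
  moreover have "card (K1 \<union> K2) = card K1 + card K2"
    using disj K1(1) K2(1) fin by (intro card_Un_disjoint) (auto intro: finite_subset)
  ultimately show ?thesis using K1(3) K2(3) by (simp add: C_def)
qed

lemma component_min_eq_root_iff:
  assumes "c \<in> {1..n}" and "component_min c = c" and "b \<in> {1..n}"
  shows "component_min b = c \<longleftrightarrow> b \<in> compl_component n E c"
  using component_min_eq_iff[OF assms(1,3)] assms(2) by simp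

lemma compl_component_root_memD:
  assumes "component_min c = c" and "b \<in> compl_component n E c"
  shows "b \<in> {1..n}" and "component_min b = c"
  using subsetD[OF compl_component_subset assms(2)] component_min_eq[OF assms(2)] assms(1) by simp_all

lemma vertices_outside_before_Un:
  assumes "c \<in> {1..n}" and "component_min c = c" and "BC \<subseteq> compl_component n E c"
  shows "{1..n} - (vertices_before c \<union> BC) = (compl_component n E c - BC) \<union> vertices_from (Suc c)"
    and "(compl_component n E c - BC) \<inter> vertices_from (Suc c) = {}"
proof -
  have C: "b \<in> {1..n} \<and> component_min b = c" if "b \<in> compl_component n E c" for b
    using compl_component_root_memD[OF assms(2) that] by simp
  show "{1..n} - (vertices_before c \<union> BC) = (compl_component n E c - BC) \<union> vertices_from (Suc c)"
  proof (rule set_eqI)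
    fix b
    show "b \<in> {1..n} - (vertices_before c \<union> BC) \<longleftrightarrow> b \<in> (compl_component n E c - BC) \<union> vertices_from (Suc c)"
    proof (cases "b \<in> {1..n}")
      case True
      then have "b \<in> compl_component n E c \<longleftrightarrow> component_min b = c"
        using component_min_eq_root_iff[OF assms(1,2) True] by simp
      moreover have "b \<in> BC \<Longrightarrow> b \<in> compl_component n E c" using assms(3) by blast
      ultimately show ?thesis using True by (auto simp: vertices_before_def vertices_from_def)
    next
      case False
      then have "b \<notin> compl_component n E c" using compl_component_subset by blast
      then show ?thesis using False by (auto simp: vertices_before_def vertices_from_def)
    qed
  qed
  show "(compl_component n E c - BC) \<inter> vertices_from (Suc c) = {}"
    using C by (force simp: vertices_from_def)
qed

lemma blocked_vertices_from:
  assumes "c \<in> {1..n}" and "component_min c = c" and "BC \<subseteq> compl_component n E c"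
    and "a \<in> vertices_from (Suc c)"
  shows "blocked vertex_rank (vertices_before c \<union> BC) a = blocked vertex_rank (vertices_before (Suc c)) a"
proof -
  have a: "a \<in> {1..n}" "Suc c \<le> component_min a" using assms(4) by (auto simp: vertices_from_def)
  have "b \<in> {1..n}" "component_min b = c" if "b \<in> BC" for b
    using compl_component_root_memD[OF assms(2)] that assms(3) by auto
  then have B: "vertices_before c \<union> BC \<subseteq> vertices_before (Suc c)"
    by (auto simp: vertices_before_def)
  have "vertex_rank b < vertex_rank a" if "b \<in> vertices_before (Suc c)" for b
    using that a vertex_rank_less_iff[OF a(1), of b] by (auto simp: vertices_before_def)
  then show ?thesis using B unfolding blocked_def by blast
qed

lemma blocked_component:
  assumes "c \<in> {1..n}" and "component_min c = c" and "BC \<subseteq> compl_component n E c"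
    and "a \<in> compl_component n E c - BC"
  shows "blocked vertex_rank (vertices_before c \<union> BC) a
    = vertices_before c \<union> (common_nbrs (compl_component n E c) {a} \<inter> (BC \<union> {b. b < a}))"
proof (rule set_eqI)
  fix b
  define C where "C = compl_component n E c"
  have sym_iff: "E a b \<longleftrightarrow> E b a" by (metis sym)
  have a: "a \<in> {1..n}" "component_min a = c"
    using compl_component_root_memD[OF assms(2)] assms(4) by auto
  have BC: "component_min x = c" "x \<in> {1..n}" if "x \<in> BC" for x
    using compl_component_root_memD[OF assms(2)] that assms(3) by auto
  show "b \<in> blocked vertex_rank (vertices_before c \<union> BC) a
    \<longleftrightarrow> b \<in> vertices_before c \<union> (common_nbrs C {a} \<inter> (BC \<union> {b. b < a}))"
  proof (cases "b \<in> {1..n}")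
    case True
    then have C_iff: "b \<in> C \<longleftrightarrow> component_min b = c"
      using component_min_eq_root_iff[OF assms(1,2)] by (simp add: C_def)
    have "E a b" if "component_min b < c"
      using that a True edge_if_notin_compl_component component_min_eq by fastforce
    then show ?thesis
      using True C_iff BC[of b] vertex_rank_less_iff[OF a(1) True] a(2)
      by (cases "component_min b" c rule: linorder_cases)
        (auto simp: blocked_def vertices_before_def common_nbrs_def sym_iff)
  next
    case False
    then have "b \<notin> C" unfolding C_def using compl_component_root_memD(1)[OF assms(2)] by blast
    then show ?thesis
      using False edge_vertices[of a b]
      by (auto simp: blocked_def vertices_before_def common_nbrs_def)
  qed
qed

end

section \<open>The representation\<close>

lemma T_word_Nil [simp]: "T_word T [] = id"
  by (simp add: T_word_def)

lemma T_word_Cons [simp]: "T_word T (a # w) = T a \<circ> T_word T w"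
  by (simp add: T_word_def)

lemma T_word_append: "T_word T (u @ v) = T_word T u \<circ> T_word T v"
  by (induction u) auto

locale gamma_rep = graph_on_vertices +
  fixes T :: "nat \<Rightarrow> 'h::{real_inner, complete_space} \<Rightarrow> 'h"
  assumes gamma_family: "gamma_family n E T"
begin

lemma bounded_linear_T: "i \<in> {1..n} \<Longrightarrow> bounded_linear (T i)"
  using gamma_family by (simp add: gamma_family_def)

lemma bounded_linear_T_word: "w \<in> words n \<Longrightarrow> bounded_linear (T_word T w)"
proof (induction w)
  case (Cons a w)
  then have "a \<in> {1..n}" "w \<in> words n" by (auto simp: words_def)
  then show ?case using bounded_linear_compose[OF bounded_linear_T Cons.IH] by (simp add: o_def)
qed (simp add: id_def bounded_linear_ident)

lemma T_commute: "E i j \<Longrightarrow> T i \<circ> T j = T j \<circ> T i"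
  using gamma_family edge_vertices unfolding gamma_family_def by blast

lemma T_word_trace_eq:
  assumes "trace_eq E u v"
  shows "T_word T u = T_word T v"
proof -
  have step: "T_word T x = T_word T y" if st: "swap_step E x y" for x y
  proof -
    obtain xs ys a b where x: "x = xs @ [a, b] @ ys" and y: "y = xs @ [b, a] @ ys" and "E a b"
      using st unfolding swap_step_def by blast
    have "T_word T x = T_word T xs \<circ> (T a \<circ> T b) \<circ> T_word T ys"
      by (simp add: x T_word_append o_assoc)
    also have "\<dots> = T_word T xs \<circ> (T b \<circ> T a) \<circ> T_word T ys"
      using T_commute[OF \<open>E a b\<close>] by simp
    finally show ?thesis by (simp add: y T_word_append o_assoc)
  qed
  show ?thesis
    using assms unfolding trace_eq_def by (induction rule: rtranclp_induct) (auto dest: step)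
qed

definition T_set :: "nat set \<Rightarrow> 'h \<Rightarrow> 'h" where
  "T_set K = T_word T (sorted_list_of_set K)"

lemma T_set_empty [simp]: "T_set {} = id"
  by (simp add: T_set_def)

lemma bounded_linear_T_set: "K \<subseteq> {1..n} \<Longrightarrow> bounded_linear (T_set K)"
  unfolding T_set_def using finite_subset[of K "{1..n}"]
  by (intro bounded_linear_T_word) (auto simp: words_def)

lemma T_set_Un:
  assumes "K \<union> U \<subseteq> {1..n}" and "is_clique E (K \<union> U)" and "K \<inter> U = {}"
  shows "T_set K \<circ> T_set U = T_set (K \<union> U)"
proof -
  have "finite K" "finite U" using assms(1) finite_subset by auto
  then have "trace_eq E (sorted_list_of_set K @ sorted_list_of_set U) (sorted_list_of_set (K \<union> U))"
    using assms(2,3) by (intro trace_eq_clique_words) auto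
  then show ?thesis unfolding T_set_def T_word_append[symmetric] by (rule T_word_trace_eq)
qed

lemma T_join_singletons:
  assumes "U \<subseteq> {1..n}"
  shows "T_join n E T ((\<lambda>i. [i]) ` U) = (if is_clique E U then T_set U else (\<lambda>_. 0))"
proof (cases "is_clique E U")
  case True
  define r where "r = (SOME r. is_join n E ((\<lambda>i. [i]) ` U) r)"
  have join: "is_join n E ((\<lambda>i. [i]) ` U) (sorted_list_of_set U)"
    using is_join_singletons_clique[OF assms True] .
  then have "is_join n E ((\<lambda>i. [i]) ` U) r" unfolding r_def by (rule someI)
  then have "T_word T r = T_set U"
    unfolding T_set_def using is_join_unique[OF _ join] T_word_trace_eq by blast
  then show ?thesis using join True by (auto simp: T_join_def r_def)
next
  case False
  then show ?thesis using is_join_singletons_imp_clique by (auto simp: T_join_def)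
qed

definition word_weight :: "'h \<Rightarrow> nat list \<Rightarrow> real" where
  "word_weight g w = (norm (adjoint (T_word T w) g))\<^sup>2"

lemma word_weight_Nil: "word_weight g [] = (norm g)\<^sup>2"
  by (simp add: word_weight_def adjoint_id_hilbert)

lemma word_weight_Cons:
  assumes "a \<in> {1..n}" and "w \<in> words n"
  shows "word_weight g (a # w) = word_weight (adjoint (T a) g) w"
  using adjoint_comp_hilbert[OF bounded_linear_T bounded_linear_T_word] assms
  by (simp add: word_weight_def)

definition avoiding_sum :: "nat \<Rightarrow> 'h \<Rightarrow> nat set \<Rightarrow> real" where
  "avoiding_sum m g B = (\<Sum>X \<in> avoiding_elems m B. word_weight g (class_rep X))"

lemma avoiding_sum_0: "avoiding_sum 0 g B = (norm g)\<^sup>2"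
proof -
  have "monoid_elems_len n E 0 = {trace_class E []}"
    by (auto simp: monoid_elems_len_eq words_def)
  moreover have "class_rep (trace_class E []) = []"
    using trace_eq_class_rep[of E "[]"] trace_eq_length by fastforce
  ultimately have "{X \<in> monoid_elems_len n E 0. \<forall>b\<in>B. \<not> initial_letter E (class_rep X) b}
      = {trace_class E []}"
    by auto
  then show ?thesis
    using \<open>class_rep (trace_class E []) = []\<close>
    by (simp add: avoiding_sum_def avoiding_elems_def word_weight_Nil)
qed

lemma avoiding_sum_Suc:
  assumes "inj_on rk {1..n}"
  shows "avoiding_sum (Suc k) g B
    = (\<Sum>a \<in> {1..n} - B. avoiding_sum k (adjoint (T a) g) (blocked rk B a))"
proof -
  have weight: "word_weight g (class_rep (trace_class E (a # class_rep Y)))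
      = word_weight (adjoint (T a) g) (class_rep Y)"
    if "a \<in> {1..n}" "Y \<in> avoiding_elems k (blocked rk B a)" for a Y
  proof -
    have "Y \<in> monoid_elems_len n E k" using that(2) by (simp add: avoiding_elems_def)
    have "word_weight g (class_rep (trace_class E (a # class_rep Y))) = word_weight g (a # class_rep Y)"
      using T_word_trace_eq[OF trace_eq_class_rep] by (simp add: word_weight_def)
    also have "\<dots> = word_weight (adjoint (T a) g) (class_rep Y)"
      using that(1) monoid_elem_rep(1)[OF \<open>Y \<in> monoid_elems_len n E k\<close>] by (rule word_weight_Cons)
    finally show ?thesis .
  qed
  have "avoiding_sum (Suc k) g B
      = (\<Sum>(a, Y) \<in> (SIGMA a:{1..n} - B. avoiding_elems k (blocked rk B a)).
           word_weight g (class_rep (trace_class E (a # class_rep Y))))"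
    unfolding avoiding_sum_def
    using sum.reindex_bij_betw[OF bij_betw_prepend_least_initial_letter[OF assms], symmetric]
    by (simp add: case_prod_beta)
  also have "\<dots> = (\<Sum>a \<in> {1..n} - B. \<Sum>Y \<in> avoiding_elems k (blocked rk B a).
      word_weight (adjoint (T a) g) (class_rep Y))"
    using finite_monoid_elems_len by (subst sum.Sigma[symmetric]) (auto simp: avoiding_elems_def weight)
  finally show ?thesis by (simp add: avoiding_sum_def)
qed

definition clique_weight :: "'h \<Rightarrow> nat set \<Rightarrow> real" where
  "clique_weight g S = (norm (adjoint (T_set S) g))\<^sup>2"

lemma clique_weight_empty: "clique_weight g {} = (norm g)\<^sup>2"
  by (simp add: clique_weight_def adjoint_id_hilbert)

lemma adjoint_T_set_Un:
  assumes "K \<in> cliques_in C" and "U \<in> cliques_in (common_nbrs C K)" and "C \<subseteq> {1..n}"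
  shows "adjoint (T_set (K \<union> U)) = adjoint (T_set U) \<circ> adjoint (T_set K)"
proof -
  have "K \<union> U - K = U" using cliques_in_common_nbrs_disjoint[OF assms(2)] by blast
  then have KU: "K \<union> U \<in> cliques_in C" using cliques_in_split_iff[of K "K \<union> U" C] assms(1,2) by simp
  then have "K \<subseteq> {1..n}" "U \<subseteq> {1..n}" using assms(3) by (auto simp: cliques_in_def)
  moreover have "T_set K \<circ> T_set U = T_set (K \<union> U)"
    using KU assms(3) cliques_in_common_nbrs_disjoint[OF assms(2)] by (intro T_set_Un) (auto simp: cliques_in_def)
  ultimately show ?thesis using adjoint_comp_hilbert[OF bounded_linear_T_set bounded_linear_T_set] by metis
qed

lemma clique_weight_insert:
  assumes "C \<subseteq> {1..n}" and "a \<in> C" and "S \<in> cliques_in (common_nbrs C {a})"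
  shows "clique_weight (adjoint (T a) g) S = clique_weight g (insert a S)"
proof -
  have "{a} \<in> cliques_in C" using assms(2) by (simp add: cliques_in_def is_clique_def)
  moreover have "T_set {a} = T a" by (simp add: T_set_def)
  ultimately show ?thesis
    using adjoint_T_set_Un[OF _ assms(3) assms(1)] by (simp add: clique_weight_def)
qed

lemma weak_brehmer_summand:
  fixes g :: 'h
  assumes "K \<in> cliques_in C" and "C \<subseteq> {1..n}" and "U \<subseteq> common_nbrs C K"
  defines "h \<equiv> adjoint (T_set K) g"
  shows "T_join n E T ((\<lambda>i. [i]) ` U) (adjoint (T_join n E T ((\<lambda>i. [i]) ` U)) h) \<bullet> h
    = (if is_clique E U then clique_weight g (K \<union> U) else 0)"
proof -
  have U: "U \<subseteq> {1..n}" using assms(2,3) by (auto simp: common_nbrs_def)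
  show ?thesis
  proof (cases "is_clique E U")
    case True
    have "adjoint (T_set U) h = adjoint (T_set (K \<union> U)) g"
      using adjoint_T_set_Un[OF assms(1) _ assms(2)] True assms(3) by (simp add: h_def cliques_in_def)
    then have "T_set U (adjoint (T_set U) h) \<bullet> h = clique_weight g (K \<union> U)"
      using inner_apply_adjoint_self[OF bounded_linear_T_set[OF U], of h] by (simp only: clique_weight_def)
    then show ?thesis using True by (simp add: T_join_singletons[OF U])
  qed (simp add: T_join_singletons[OF U])
qed

end

locale brehmer_rep = gamma_rep +
  assumes weak_brehmer: "weak_brehmer n E T"
begin

lemma brehmer_sum_clique_weight_nonneg:
  assumes "v \<in> {1..n}" and "K \<in> cliques_in (compl_component n E v)"
  shows "0 \<le> brehmer_sum (compl_component n E v) (clique_weight g) K"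
proof -
  define C where "C = compl_component n E v"
  define N where "N = common_nbrs C K"
  define h where "h = adjoint (T_set K) g"
  have C: "C \<subseteq> {1..n}" "K \<in> cliques_in C" using assms(2) compl_component_subset by (auto simp: C_def)
  then have "finite N" by (intro finite_subset[of N "{1..n}"]) (auto simp: N_def common_nbrs_def)
  have "K \<subseteq> C" "is_clique E K" using C(2) by (auto simp: cliques_in_def)
  then have "0 \<le> (\<Sum>U \<in> Pow N. (-1) ^ card U *\<^sub>R
      T_join n E T ((\<lambda>i. [i]) ` U) (adjoint (T_join n E T ((\<lambda>i. [i]) ` U)) h)) \<bullet> h"
    using bspec[OF weak_brehmer[unfolded weak_brehmer_def] assms(1), rule_format, of K]
    by (simp add: Let_def C_def N_def common_nbrs_def)
  also have "\<dots> = (\<Sum>U \<in> Pow N. if is_clique E U then (-1) ^ card U * clique_weight g (K \<union> U) else 0)"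
    unfolding inner_sum_left
  proof (rule sum.cong[OF refl])
    fix U assume "U \<in> Pow N"
    then show "((-1) ^ card U *\<^sub>R T_join n E T ((\<lambda>i. [i]) ` U) (adjoint (T_join n E T ((\<lambda>i. [i]) ` U)) h)) \<bullet> h
        = (if is_clique E U then (-1) ^ card U * clique_weight g (K \<union> U) else 0)"
      using weak_brehmer_summand[OF C(2) C(1), of U g] by (simp add: h_def N_def)
  qed
  also have "\<dots> = (\<Sum>U \<in> {U \<in> Pow N. is_clique E U}. (-1) ^ card U * clique_weight g (K \<union> U))"
    using \<open>finite N\<close> by (intro sum.inter_filter[symmetric]) simp
  also have "\<dots> = brehmer_sum C (clique_weight g) K"
    unfolding brehmer_sum_def N_def cliques_in_def by (simp add: Pow_def)
  finally show ?thesis by (simp add: C_def)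
qed

end

section \<open>Counting multisets\<close>

definition multichoose :: "nat \<Rightarrow> nat \<Rightarrow> nat" where
  "multichoose w l = (w + l - 1) choose l"

lemma multichoose_0 [simp]: "multichoose w 0 = 1"
  by (simp add: multichoose_def)

lemma multichoose_Suc_Suc: "multichoose (Suc w) (Suc k) = multichoose w (Suc k) + multichoose (Suc w) k"
  by (simp add: multichoose_def)

lemma multichoose_mono: "w \<le> w' \<Longrightarrow> multichoose w l \<le> multichoose w' l"
  unfolding multichoose_def by (rule binomial_right_mono) simp

lemma multichoose_add_Suc:
  "multichoose (A + D) (Suc k) = multichoose A (Suc k) + (\<Sum>i\<in>{1..D}. multichoose (A + i) k)"
  by (induction D) (simp_all add: multichoose_Suc_Suc[of "A + _"])

lemma card_less_in_less_card:
  fixes P :: "nat set"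
  assumes "finite P" and "a \<in> P"
  shows "card {b\<in>P. b < a} < card P"
  using assms by (intro psubset_card_mono) auto

lemma inj_on_card_less:
  fixes P :: "nat set"
  assumes "finite P"
  shows "inj_on (\<lambda>a. card {b\<in>P. b < a}) P"
proof (rule inj_onI, rule ccontr)
  have less: "card {b\<in>P. b < x} < card {b\<in>P. b < y}" if "x \<in> P" "x < y" for x y
    using assms that by (intro psubset_card_mono) auto
  fix x y assume xy: "x \<in> P" "y \<in> P" "card {b\<in>P. b < x} = card {b\<in>P. b < y}" "x \<noteq> y"
  then consider "x < y" | "y < x" by linarith
  then show False
    by cases (use less[of x y] less[of y x] xy in simp_all)
qed

text \<open>The values \<open>D - card {b\<in>P. b < a}\<close> are distinct elements of \<open>{1..D}\<close>, and the right
  side is the hockey-stick sum \<open>multichoose_add_Suc\<close> over all of \<open>{1..D}\<close>.\<close>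

lemma sum_multichoose_rank_le:
  fixes P :: "nat set"
  assumes "finite P" and "card P \<le> D"
  shows "(\<Sum>a\<in>P. multichoose (A + (D - card {b\<in>P. b < a})) k) + multichoose A (Suc k)
    \<le> multichoose (A + D) (Suc k)"
proof -
  define r where "r a = card {b\<in>P. b < a}" for a
  have r_less: "r a < D" if "a \<in> P" for a
    using card_less_in_less_card[OF assms(1) that] assms(2) by (simp add: r_def)
  have "inj_on (\<lambda>a. D - r a) P"
  proof (rule inj_onI)
    fix a b assume "a \<in> P" "b \<in> P" "D - r a = D - r b"
    then have "r a = r b" using r_less[of a] r_less[of b] by linarith
    then show "a = b" using inj_on_card_less[OF assms(1)] \<open>a \<in> P\<close> \<open>b \<in> P\<close>
      by (simp add: r_def inj_on_def)
  qed
  then have "(\<Sum>a\<in>P. multichoose (A + (D - r a)) k) = (\<Sum>i\<in>(\<lambda>a. D - r a) ` P. multichoose (A + i) k)"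
    by (simp add: sum.reindex)
  also have "\<dots> \<le> (\<Sum>i\<in>{1..D}. multichoose (A + i) k)"
    using r_less by (intro sum_mono2) force+
  finally show ?thesis by (simp add: r_def multichoose_add_Suc)
qed

context simple_graph
begin

lemma sum_multichoose_clique_le:
  assumes "K \<in> cliques_in C" and "finite C"
  defines "w \<equiv> clique_number_on C"
  shows "(\<Sum>a\<in>K - BC. multichoose (w - card (common_nbrs C {a} \<inter> (BC \<union> {b. b < a}) \<inter> (K - {a})) + A) k)
      + multichoose A (Suc k)
    \<le> multichoose (w - card (BC \<inter> K) + A) (Suc k)"
proof -
  define s where "s = card (BC \<inter> K)"
  define P where "P = K - BC"
  have K: "K \<subseteq> C" "is_clique E K" using assms(1) by (auto simp: cliques_in_def)
  then have "finite K" using assms(2) finite_subset by auto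
  have "card K = card ((BC \<inter> K) \<union> (K - BC))" by (rule arg_cong[where f=card]) blast
  also have "\<dots> = s + card P" unfolding s_def P_def using \<open>finite K\<close> by (intro card_Un_disjoint) auto
  finally have "card K = s + card P" .
  moreover have "card K \<le> w" unfolding w_def using assms(2) K by (rule card_le_clique_number_on)
  ultimately have P: "finite P" "card P \<le> w - s" using \<open>finite K\<close> by (auto simp: P_def)
  have prior: "common_nbrs C {a} \<inter> (BC \<union> {b. b < a}) \<inter> (K - {a}) = (BC \<inter> K) \<union> {b\<in>P. b < a}"
    if "a \<in> P" for a
    using that K unfolding P_def common_nbrs_def is_clique_def by (auto dest: sym)
  have "card (common_nbrs C {a} \<inter> (BC \<union> {b. b < a}) \<inter> (K - {a})) = s + card {b\<in>P. b < a}"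
    if "a \<in> P" for a
  proof -
    have "card ((BC \<inter> K) \<union> {b\<in>P. b < a}) = s + card {b\<in>P. b < a}"
      unfolding s_def P_def using \<open>finite K\<close> by (intro card_Un_disjoint) auto
    then show ?thesis using prior[OF that] by simp
  qed
  then have "(\<Sum>a\<in>P. multichoose (w - card (common_nbrs C {a} \<inter> (BC \<union> {b. b < a}) \<inter> (K - {a})) + A) k)
      = (\<Sum>a\<in>P. multichoose (A + (w - s - card {b\<in>P. b < a})) k)"
    by (simp add: add.commute)
  then show ?thesis
    using sum_multichoose_rank_le[OF P, of A k] by (simp add: P_def s_def add.commute)
qed

lemma sum_cliques_through_swap:
  assumes "finite C"
  shows "(\<Sum>a\<in>C - BC. \<Sum>K\<in>{K\<in>cliques_in C. a \<in> K}. f a K)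
    = (\<Sum>K\<in>cliques_in C. \<Sum>a\<in>K - BC. f a K)"
proof -
  have "(\<Sum>a\<in>C - BC. \<Sum>K\<in>{K\<in>cliques_in C. a \<in> K}. f a K)
      = (\<Sum>K\<in>cliques_in C. \<Sum>a\<in>{a\<in>C - BC. a \<in> K}. f a K)"
    using assms finite_cliques_in by (intro sum.swap_restrict) auto
  also have "\<dots> = (\<Sum>K\<in>cliques_in C. \<Sum>a\<in>K - BC. f a K)"
  proof (rule sum.cong[OF refl])
    fix K assume "K \<in> cliques_in C"
    then have "{a\<in>C - BC. a \<in> K} = K - BC" by (auto simp: cliques_in_def)
    then show "(\<Sum>a\<in>{a\<in>C - BC. a \<in> K}. f a K) = (\<Sum>a\<in>K - BC. f a K)" by simp
  qed
  finally show ?thesis .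
qed

end

context brehmer_rep
begin

lemma avoiding_sum_component_letter_le:
  fixes c :: nat
  defines "C \<equiv> compl_component n E c"
  assumes "c \<in> {1..n}" and "component_min c = c"
    and "BC \<subseteq> C" and "a \<in> C - BC"
    and IH: "\<And>g BC. BC \<subseteq> C \<Longrightarrow> avoiding_sum k g (vertices_before c \<union> BC)
      \<le> (\<Sum>K\<in>cliques_in C. brehmer_sum C (clique_weight g) K
            * real (multichoose (clique_number_on C - card (BC \<inter> K) + A) k))"
  shows "avoiding_sum k (adjoint (T a) g) (blocked vertex_rank (vertices_before c \<union> BC) a)
    \<le> (\<Sum>K\<in>{K\<in>cliques_in C. a \<in> K}. brehmer_sum C (clique_weight g) K
          * real (multichoose (clique_number_on C
              - card (common_nbrs C {a} \<inter> (BC \<union> {b. b < a}) \<inter> (K - {a})) + A) k))"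
proof -
  define N where "N = common_nbrs C {a}"
  define Bp where "Bp = N \<inter> (BC \<union> {b. b < a})"
  define \<phi> where "\<phi> J = real (multichoose (clique_number_on C - card (Bp \<inter> J) + A) k)" for J
  have "Bp \<subseteq> C" by (auto simp: Bp_def N_def common_nbrs_def)
  have "avoiding_sum k (adjoint (T a) g) (blocked vertex_rank (vertices_before c \<union> BC) a)
      = avoiding_sum k (adjoint (T a) g) (vertices_before c \<union> Bp)"
    using blocked_component[OF assms(2,3)] assms(4,5) by (simp add: C_def Bp_def N_def)
  also have "\<dots> \<le> (\<Sum>K\<in>cliques_in C. brehmer_sum C (clique_weight (adjoint (T a) g)) K * \<phi> K)"
    using IH[OF \<open>Bp \<subseteq> C\<close>] by (simp add: \<phi>_def)
  also have "\<dots> = (\<Sum>K\<in>cliques_in C. brehmer_sum C (clique_weight (adjoint (T a) g)) K * \<phi> (K \<inter> N))"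
  proof -
    have "Bp \<inter> K = Bp \<inter> (K \<inter> N)" for K by (auto simp: Bp_def)
    then show ?thesis by (simp add: \<phi>_def)
  qed
  also have "\<dots> = (\<Sum>K\<in>{K\<in>cliques_in C. a \<in> K}. brehmer_sum C (clique_weight g) K * \<phi> (K - {a}))"
    unfolding N_def
    by (rule brehmer_sum_shift)
      (use assms(5) clique_weight_insert[of C a] compl_component_subset finite_compl_component
        in \<open>auto simp: C_def\<close>)
  finally show ?thesis by (simp add: \<phi>_def Bp_def N_def Int_assoc)
qed

lemma avoiding_sum_Suc_before_Un:
  assumes "c \<in> {1..n}" and "component_min c = c" and "BC \<subseteq> compl_component n E c"
  shows "avoiding_sum (Suc k) g (vertices_before c \<union> BC)
    = (\<Sum>a\<in>compl_component n E c - BC.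
          avoiding_sum k (adjoint (T a) g) (blocked vertex_rank (vertices_before c \<union> BC) a))
      + avoiding_sum (Suc k) g (vertices_before (Suc c))"
proof -
  have "{1..n} - vertices_before (Suc c) = vertices_from (Suc c)"
    by (auto simp: vertices_before_def vertices_from_def)
  then have "(\<Sum>a\<in>vertices_from (Suc c).
      avoiding_sum k (adjoint (T a) g) (blocked vertex_rank (vertices_before c \<union> BC) a))
    = avoiding_sum (Suc k) g (vertices_before (Suc c))"
    using blocked_vertices_from[OF assms] by (simp add: avoiding_sum_Suc[OF inj_on_vertex_rank])
  moreover have "finite (compl_component n E c)" "finite (vertices_from (Suc c))"
    by (simp_all add: finite_compl_component vertices_from_def)
  ultimately show ?thesis
    using vertices_outside_before_Un[OF assms]
    by (simp add: avoiding_sum_Suc[OF inj_on_vertex_rank] sum.union_disjoint)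
qed


text \<open>The strengthened statement for the induction on \<open>m\<close>: the nonnegative terms
  \<open>brehmer_sum C (clique_weight g) K\<close> add up to \<open>\<parallel>g\<parallel>\<^sup>2\<close>, and the clique \<open>K\<close> carries a
  multiset count from which the letters of \<open>K\<close> that may not be initial (those in \<open>BC\<close>) are
  removed.  The later components enter only through the bound \<open>later\<close>.\<close>

lemma avoiding_sum_before_component_le:
  fixes c :: nat
  defines "C \<equiv> compl_component n E c"
  assumes c: "c \<in> {1..n}" "component_min c = c"
    and later: "\<And>m g. avoiding_sum m g (vertices_before (Suc c)) \<le> real (multichoose A m) * (norm g)\<^sup>2"
  shows "BC \<subseteq> C \<Longrightarrow> avoiding_sum m g (vertices_before c \<union> BC)
    \<le> (\<Sum>K\<in>cliques_in C. brehmer_sum C (clique_weight g) K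
          * real (multichoose (clique_number_on C - card (BC \<inter> K) + A) m))"
proof (induction m arbitrary: g BC)
  case 0
  then show ?case
    using sum_brehmer_sum[of C] finite_compl_component by (simp add: avoiding_sum_0 clique_weight_empty C_def)
next
  case (Suc k)
  define bs where "bs K = brehmer_sum C (clique_weight g) K" for K
  define \<phi> where "\<phi> a K = real (multichoose (clique_number_on C
    - card (common_nbrs C {a} \<inter> (BC \<union> {b. b < a}) \<inter> (K - {a})) + A) k)" for a K
  have fin: "finite C" by (simp add: C_def finite_compl_component)
  have "avoiding_sum (Suc k) g (vertices_before c \<union> BC)
      = (\<Sum>a\<in>C - BC. avoiding_sum k (adjoint (T a) g) (blocked vertex_rank (vertices_before c \<union> BC) a))
        + avoiding_sum (Suc k) g (vertices_before (Suc c))"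
    unfolding C_def by (rule avoiding_sum_Suc_before_Un[OF c Suc.prems[unfolded C_def]])
  also have "\<dots> \<le> (\<Sum>a\<in>C - BC. \<Sum>K\<in>{K\<in>cliques_in C. a \<in> K}. bs K * \<phi> a K)
        + real (multichoose A (Suc k)) * (norm g)\<^sup>2"
    using avoiding_sum_component_letter_le[OF c Suc.prems[unfolded C_def] _ Suc.IH[unfolded C_def]] later
    by (intro add_mono sum_mono) (simp_all add: C_def bs_def \<phi>_def)
  also have "\<dots> = (\<Sum>K\<in>cliques_in C. bs K * ((\<Sum>a\<in>K - BC. \<phi> a K) + real (multichoose A (Suc k))))"
  proof -
    have "(\<Sum>K\<in>cliques_in C. bs K * real (multichoose A (Suc k))) = real (multichoose A (Suc k)) * (norm g)\<^sup>2"
      using sum_brehmer_sum[OF fin, of "clique_weight g"]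
      by (simp add: bs_def clique_weight_empty mult.commute flip: sum_distrib_left)
    then show ?thesis
      using sum_cliques_through_swap[OF fin, of "\<lambda>a K. bs K * \<phi> a K" BC]
      by (simp add: distrib_left sum_distrib_left sum.distrib)
  qed
  also have "\<dots> \<le> (\<Sum>K\<in>cliques_in C. bs K * real (multichoose (clique_number_on C - card (BC \<inter> K) + A) (Suc k)))"
    using sum_multichoose_clique_le[OF _ fin, of _ BC A k] brehmer_sum_clique_weight_nonneg[OF c(1)]
    by (intro sum_mono mult_left_mono) (simp_all add: \<phi>_def bs_def C_def flip: of_nat_sum of_nat_add)
  finally show ?case by (simp add: bs_def)
qed

lemma avoiding_sum_vertices_before_le:
  "c \<le> n + 1 \<Longrightarrow> avoiding_sum m g (vertices_before c)
    \<le> real (multichoose (clique_number_on (vertices_from c)) m) * (norm g)\<^sup>2"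
proof (induction c arbitrary: m g rule: inc_induct)
  case base
  have "vertices_before (n + 1) = {1..n}"
    using component_min_le by (fastforce simp: vertices_before_def)
  then show ?case
    by (cases m) (simp_all add: avoiding_sum_0 avoiding_sum_Suc[OF inj_on_vertex_rank])
next
  case (step c)
  show ?case
  proof (cases "c \<in> {1..n} \<and> component_min c = c")
    case True
    define C where "C = compl_component n E c"
    define A where "A = clique_number_on (vertices_from (Suc c))"
    have "avoiding_sum m g (vertices_before c)
        \<le> (\<Sum>K\<in>cliques_in C. brehmer_sum C (clique_weight g) K * real (multichoose (clique_number_on C + A) m))"
      using avoiding_sum_before_component_le[of c, OF _ _ step.IH, of "{}"] True by (simp add: C_def A_def)
    also have "\<dots> = real (multichoose (clique_number_on C + A) m) * (norm g)\<^sup>2"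
      using sum_brehmer_sum[of C] finite_compl_component
      by (simp add: sum_distrib_right[symmetric] clique_weight_empty C_def)
    also have "\<dots> \<le> real (multichoose (clique_number_on (vertices_from c)) m) * (norm g)\<^sup>2"
      using clique_number_on_component_add_le True multichoose_mono
      by (intro mult_right_mono) (simp_all add: C_def A_def)
    finally show ?thesis .
  next
    case False
    then show ?thesis using step.IH by (simp add: vertices_before_from_Suc_eq_if_not_root)
  qed
qed

end

theorem lemma4p3:
  fixes n :: nat and E :: "nat \<Rightarrow> nat \<Rightarrow> bool"
    and T :: "nat \<Rightarrow> 'h::{real_inner, complete_space} \<Rightarrow> 'h"
    and m :: nat and h :: 'h
  assumes sym: "\<And>i j. E i j \<Longrightarrow> E j i"
    and irrefl: "\<And>i. \<not> E i i"
    and onV: "\<And>i j. E i j \<Longrightarrow> i \<in> {1..n} \<and> j \<in> {1..n}"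
    and fam: "gamma_family n E T"
    and wb: "weak_brehmer n E T"
    and m: "m \<ge> 1"
  shows "(\<Sum>X \<in> monoid_elems_len n E m. (norm (adjoint (T_word T (SOME w. w \<in> X)) h))\<^sup>2)
           \<le> real ((clique_number n E + m - 1) choose m) * (norm h)\<^sup>2"
proof -
  \<comment> \<open>The bound also holds for \<open>m = 0\<close>.\<close>
  interpret brehmer_rep E n T
    by unfold_locales (use sym irrefl onV fam wb in auto)
  have "vertices_before 1 = {}" "vertices_from 1 = {1..n}"
    using component_min_in_vertices by (force simp: vertices_before_def vertices_from_def)+
  moreover have "(\<Sum>X \<in> monoid_elems_len n E m. (norm (adjoint (T_word T (SOME w. w \<in> X)) h))\<^sup>2)
      = avoiding_sum m h {}"
    by (simp add: avoiding_sum_def avoiding_elems_def word_weight_def class_rep_def)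
  ultimately show ?thesis
    using avoiding_sum_vertices_before_le[of 1 m h]
    by (simp add: clique_number_def clique_number_on_def multichoose_def)
qed

end
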